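(* Let $N\ge1$, let $V$ be the vertex set of the infinite $N$-ary tree and $\Delta$ its graph Laplacian on $l^2(V)$. Then the spectrum of $\Delta$ is $[N+1-2\sqrt N,\,N+1+2\sqrt N]$, and $\Delta$ has no eigenvalues.
   Context: $V$ is the set of finite words over $\{1,\dots,N\}$ including the empty word $\emptyset$; the $N$-ary tree has edges exactly the pairs $\{\omega,\omega i\}$, $\omega\in V$, $i\in\{1,\dots,N\}$, where $\omega i$ is $\omega$ with the letter $i$ appended. $\Delta$ is the graph Laplacian with conductance $1$: $(\Delta v)(x)=\sum_{y\sim x}(v(x)-v(y))$, a bounded selfadjoint operator on $l^2(V)$. *)

theory Defs
  imports "HOL-Analysis.Analysis"
begin

text \<open>Vertices of the infinite N-ary tree: finite words over the alphabet {1..N}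
  (the empty word is the root). Edges: {w, w@[i]} for i in {1..N}.\<close>
definition tree_V :: "nat \<Rightarrow> nat list set" where
  "tree_V N = {w. set w \<subseteq> {1..N}}"

definition l2 :: "nat \<Rightarrow> (nat list \<Rightarrow> complex) set" where
  "l2 N = {v. (\<forall>w. w \<notin> tree_V N \<longrightarrow> v w = 0) \<and>
              (\<lambda>w. (norm (v w))\<^sup>2) summable_on tree_V N}"

definition l2_norm :: "nat \<Rightarrow> (nat list \<Rightarrow> complex) \<Rightarrow> real" where
  "l2_norm N v = sqrt (infsum (\<lambda>w. (norm (v w))\<^sup>2) (tree_V N))"

definition tree_laplacian :: "nat \<Rightarrow> (nat list \<Rightarrow> complex) \<Rightarrow> nat list \<Rightarrow> complex" where
  "tree_laplacian N v x =
     (if x \<in> tree_V N then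
        (\<Sum>i\<in>{1..N}. v x - v (x @ [i])) + (if x = [] then 0 else v x - v (butlast x))
      else 0)"

definition tree_spectrum :: "nat \<Rightarrow> complex set" where
  "tree_spectrum N = {mu. \<not> (\<exists>S. (\<forall>v\<in>l2 N. S v \<in> l2 N) \<and>
        (\<exists>C. \<forall>v\<in>l2 N. l2_norm N (S v) \<le> C * l2_norm N v) \<and>
        (\<forall>v\<in>l2 N. S (\<lambda>x. tree_laplacian N v x - mu * v x) = v) \<and>
        (\<forall>v\<in>l2 N. (\<lambda>x. tree_laplacian N (S v) x - mu * S v x) = v))}"

definition tree_eigenvalues :: "nat \<Rightarrow> complex set" where
  "tree_eigenvalues N = {mu. \<exists>v\<in>l2 N. v \<noteq> (\<lambda>_. 0) \<and> tree_laplacian N v = (\<lambda>x. mu * v x)}"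

end

theory Submission
  imports Defs
begin

text \<open>Write \<open>N + 1 - \<mu> = \<surd>N (r + 1 / r)\<close> with \<open>\<bar>r\<bar> \<le> 1\<close>. For an \<open>l\<^sup>2\<close> eigenfunction \<open>v\<close>, the sums
  of \<open>v\<close> over the descendants of a vertex at distance \<open>k\<close>, divided by \<open>\<surd>N ^ k\<close>, tend to \<open>0\<close> and
  satisfy a three-term recurrence with characteristic roots \<open>r\<close> and \<open>1 / r\<close>; this forces \<open>v = 0\<close>.
  If \<open>\<bar>r\<bar> = 1\<close>, i.e. \<open>\<mu>\<close> lies in the interval, truncations of the radial function \<open>(r / \<surd>N) ^ |x|\<close>
  are approximate eigenvectors. If \<open>\<bar>r\<bar> < 1\<close>, then with \<open>q = r / \<surd>N\<close> the operator \<open>q (\<Delta> - \<mu>)\<close>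
  factors, up to a defect at the root, as \<open>(1 - q C) (1 - q P)\<close>, where \<open>C\<close> sums over the children and
  \<open>P\<close> reads off the parent; both factors are inverted by Neumann series, which converge on \<open>l\<^sup>2\<close>
  because \<open>\<bar>q\<bar> \<surd>N < 1\<close>.\<close>

lemma norm_add_sq_le:
  fixes a b :: "'a::real_normed_vector"
  shows "(norm (a + b))\<^sup>2 \<le> 2 * (norm a)\<^sup>2 + 2 * (norm b)\<^sup>2"
proof -
  have "(norm (a + b))\<^sup>2 \<le> (norm a + norm b)\<^sup>2"
    by (intro power_mono norm_triangle_ineq) auto
  also have "\<dots> \<le> 2 * (norm a)\<^sup>2 + 2 * (norm b)\<^sup>2"
    using sum_squares_bound[of "norm a" "norm b"] by (simp add: power2_eq_square algebra_simps)
  finally show ?thesis .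
qed

lemma square_sum4_le:
  fixes a b c d :: real
  shows "(a + b + c + d)\<^sup>2 \<le> 4 * (a\<^sup>2 + b\<^sup>2 + c\<^sup>2 + d\<^sup>2)"
  using sum_squared_le_sum_of_squares[of "nth [a, b, c, d]" "{0..<4}"]
  by (simp add: numeral_eq_Suc atLeast0LessThan lessThan_Suc algebra_simps)

lemma norm_sum_sq_le_card:
  fixes a :: "'i \<Rightarrow> 'a::real_normed_vector"
  shows "(norm (\<Sum>i\<in>A. a i))\<^sup>2 \<le> real (card A) * (\<Sum>i\<in>A. (norm (a i))\<^sup>2)"
proof -
  have "(norm (\<Sum>i\<in>A. a i))\<^sup>2 \<le> (\<Sum>i\<in>A. norm (a i))\<^sup>2"
    by (intro power_mono norm_sum) auto
  also have "\<dots> \<le> real (card A) * (\<Sum>i\<in>A. (norm (a i))\<^sup>2)"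
    using sum_squared_le_sum_of_squares[of "\<lambda>i. norm (a i)" A] by (simp add: mult.commute)
  finally show ?thesis .
qed

lemma sum_power_le_geometric:
  fixes a :: real
  assumes "0 \<le> a" "a < 1" "finite A"
  shows "(\<Sum>k\<in>A. a ^ k) \<le> 1 / (1 - a)"
proof -
  have "(\<Sum>k\<in>A. a ^ k) \<le> (\<Sum>k. a ^ k)"
    using assms by (intro sum_le_suminf summable_geometric) (auto simp: \<open>0 \<le> a\<close>)
  then show ?thesis using suminf_geometric[of a] assms by simp
qed

text \<open>Cauchy--Schwarz with the weights \<open>a ^ k\<close>, whose total mass is at most \<open>1 / (1 - a)\<close>.\<close>
lemma square_sum_geometric_weights_le:
  fixes a :: real and e :: "nat \<Rightarrow> real"
  assumes "0 \<le> a" "a < 1" "finite A" "\<And>k. e k \<ge> 0"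
  shows "(\<Sum>k\<in>A. a ^ k * sqrt (e k))\<^sup>2 \<le> (\<Sum>k\<in>A. a ^ k * e k) / (1 - a)"
proof -
  have "(\<Sum>k\<in>A. a ^ k * sqrt (e k)) = (\<Sum>k\<in>A. sqrt (a ^ k) * sqrt (a ^ k * e k))"
    using assms by (intro sum.cong) (auto simp: real_sqrt_mult mult.assoc[symmetric])
  also have "(\<dots>)\<^sup>2 \<le> (\<Sum>k\<in>A. (sqrt (a ^ k))\<^sup>2) * (\<Sum>k\<in>A. (sqrt (a ^ k * e k))\<^sup>2)"
    by (rule Cauchy_Schwarz_ineq_sum)
  also have "\<dots> = (\<Sum>k\<in>A. a ^ k) * (\<Sum>k\<in>A. a ^ k * e k)"
    using assms by simp
  also have "\<dots> \<le> 1 / (1 - a) * (\<Sum>k\<in>A. a ^ k * e k)"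
    using assms by (intro mult_right_mono sum_power_le_geometric sum_nonneg) auto
  finally show ?thesis by simp
qed


lemma square_suminf_geometric_weights_le:
  fixes a B :: real and e :: "nat \<Rightarrow> real"
  assumes a: "0 \<le> a" "a < 1" and e: "\<And>k. 0 \<le> e k" "\<And>k. e k \<le> B"
  shows "summable (\<lambda>k. a ^ k * sqrt (e k))" "summable (\<lambda>k. a ^ k * e k)"
    "(\<Sum>k. a ^ k * sqrt (e k))\<^sup>2 \<le> (\<Sum>k. a ^ k * e k) / (1 - a)"
proof -
  have geometric: "summable (\<lambda>k. a ^ k * c)" for c
    using a by (intro summable_mult2 summable_geometric) auto
  show sqrt: "summable (\<lambda>k. a ^ k * sqrt (e k))"
  proof (rule summable_comparison_test'[OF geometric[of "sqrt B"]])
    show "norm (a ^ k * sqrt (e k)) \<le> a ^ k * sqrt B" for k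
      using a e(1)[of k] e(2)[of k] by (simp add: abs_mult mult_left_mono)
  qed
  show lin: "summable (\<lambda>k. a ^ k * e k)"
  proof (rule summable_comparison_test'[OF geometric[of B]])
    show "norm (a ^ k * e k) \<le> a ^ k * B" for k
      using a e(1)[of k] e(2)[of k] by (simp add: abs_mult mult_left_mono)
  qed
  have "(\<Sum>k<n. a ^ k * sqrt (e k))\<^sup>2 \<le> (\<Sum>k. a ^ k * e k) / (1 - a)" for n
  proof -
    have "(\<Sum>k<n. a ^ k * sqrt (e k))\<^sup>2 \<le> (\<Sum>k<n. a ^ k * e k) / (1 - a)"
      using a e by (intro square_sum_geometric_weights_le) auto
    also have "\<dots> \<le> (\<Sum>k. a ^ k * e k) / (1 - a)"
      using a e by (intro divide_right_mono sum_le_suminf lin) auto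
    finally show ?thesis .
  qed
  moreover have "(\<lambda>n. (\<Sum>k<n. a ^ k * sqrt (e k))\<^sup>2) \<longlonglongrightarrow> (\<Sum>k. a ^ k * sqrt (e k))\<^sup>2"
    by (intro tendsto_power summable_LIMSEQ sqrt)
  ultimately show "(\<Sum>k. a ^ k * sqrt (e k))\<^sup>2 \<le> (\<Sum>k. a ^ k * e k) / (1 - a)"
    by (intro LIMSEQ_le_const2) auto
qed

section \<open>The Joukowski map and a three-term recurrence\<close>

text \<open>Inverting the Joukowski map \<open>r \<mapsto> r + 1 / r\<close>: the two preimages have product \<open>1\<close>, so one of
  them lies in the closed unit disc, and a preimage on the unit circle forces \<open>z \<in> [-2, 2]\<close>.\<close>
lemma obtain_joukowski_preimage:
  fixes z :: complex
  obtains r where "r \<noteq> 0" "norm r \<le> 1" "z = r + inverse r"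
    "norm r = 1 \<Longrightarrow> z \<in> \<real> \<and> \<bar>Re z\<bar> \<le> 2"
proof -
  define s where "s = csqrt (z\<^sup>2 / 4 - 1)"
  define r1 where "r1 = z / 2 + s"
  define r2 where "r2 = z / 2 - s"
  have "r1 * r2 = z\<^sup>2 / 4 - s\<^sup>2"
    unfolding r1_def r2_def by (simp add: power2_eq_square field_simps)
  then have prod: "r1 * r2 = 1"
    unfolding s_def by simp
  then have inv: "r2 = inverse r1" "r1 = inverse r2"
    by (metis inverse_unique, metis inverse_unique mult.commute)
  have sum: "r1 + r2 = z"
    unfolding r1_def r2_def by simp
  have circle: "z \<in> \<real> \<and> \<bar>Re z\<bar> \<le> 2" if "norm r = 1" "z = r + inverse r" for r
  proof -
    have "r * cnj r = 1" using complex_norm_square[of r] that(1) by simp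
    then have "inverse r = cnj r" by (metis inverse_unique)
    then have "z = complex_of_real (2 * Re r)" using that(2) complex_add_cnj by simp
    moreover have "\<bar>Re r\<bar> \<le> 1" using abs_Re_le_cmod[of r] that(1) by simp
    ultimately show ?thesis by auto
  qed
  have "norm r1 * norm r2 = 1"
    using prod by (metis norm_mult norm_one)
  then consider "norm r1 \<le> 1" | "norm r2 \<le> 1"
    using mult_strict_mono[of 1 "norm r1" 1 "norm r2"] by force
  then show ?thesis
  proof cases
    case 1
    then show ?thesis using that[of r1] circle[of r1] sum inv prod by force
  next
    case 2
    then show ?thesis using that[of r2] circle[of r2] sum inv prod by (force simp: add.commute)
  qed
qed


text \<open>The solutions of \<open>b (k + 2) = (r + 1 / r) b (k + 1) - b k\<close> are combinations of \<open>r ^ k\<close> and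
  \<open>r ^ (- k)\<close>; for \<open>0 < \<bar>r\<bar> \<le> 1\<close> only the first can tend to \<open>0\<close>, and not even that if \<open>\<bar>r\<bar> = 1\<close>.\<close>
lemma decaying_solution_of_recurrence:
  fixes b :: "nat \<Rightarrow> complex"
  assumes lim: "b \<longlonglongrightarrow> 0"
    and rec: "\<And>k. b (Suc (Suc k)) = (r + inverse r) * b (Suc k) - b k"
    and r: "r \<noteq> 0" "norm r \<le> 1"
  shows "b 1 = r * b 0" "norm r = 1 \<Longrightarrow> b 0 = 0"
proof -
  define d where "d k = b (Suc k) - r * b k" for k
  have d_Suc: "d (Suc k) = inverse r * d k" for k
  proof -
    have "d (Suc k) = (r + inverse r) * b (Suc k) - b k - r * b (Suc k)"
      unfolding d_def rec ..
    also have "\<dots> = inverse r * d k"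
      using r unfolding d_def by (simp add: field_simps)
    finally show ?thesis .
  qed
  have d_power: "d k = inverse r ^ k * d 0" for k
    by (induction k) (auto simp: d_Suc)
  have d_grows: "norm (d 0) \<le> norm (d k)" for k
  proof -
    have "1 \<le> norm (inverse r) ^ k"
      using r by (intro one_le_power) (simp add: norm_inverse one_le_inverse_iff)
    then show ?thesis
      unfolding d_power[of k] norm_mult norm_power
      using mult_right_mono[of 1 "norm (inverse r) ^ k" "norm (d 0)"] by simp
  qed
  have "d \<longlonglongrightarrow> 0"
    unfolding d_def using tendsto_diff[OF LIMSEQ_Suc[OF lim] tendsto_mult[OF tendsto_const lim, of r]] by simp
  then have "(\<lambda>k. norm (d k)) \<longlonglongrightarrow> 0"
    by (rule tendsto_norm_zero)
  then have "norm (d 0) \<le> 0"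
    by (rule LIMSEQ_le_const) (use d_grows in blast)
  then have d0: "d 0 = 0" by simp
  then show "b 1 = r * b 0" unfolding d_def by simp
  assume "norm r = 1"
  have b_power: "b k = r ^ k * b 0" for k
  proof (induction k)
    case (Suc k)
    have "d k = 0" using d_power[of k] d0 by simp
    with Suc show ?case by (simp add: d_def)
  qed simp
  have "(\<lambda>k. norm (b k)) = (\<lambda>k. norm (b 0))"
  proof
    show "norm (b k) = norm (b 0)" for k
      unfolding b_power[of k] using \<open>norm r = 1\<close> by (simp add: norm_mult norm_power)
  qed
  moreover have "(\<lambda>k. norm (b k)) \<longlonglongrightarrow> 0"
    using lim by (rule tendsto_norm_zero)
  ultimately show "b 0 = 0"
    by (simp add: LIMSEQ_const_iff)
qed


definition tree_level :: "nat \<Rightarrow> nat \<Rightarrow> nat list set" where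
  "tree_level N k = {t. set t \<subseteq> {1..N} \<and> length t = k}"

lemma finite_tree_level [simp]: "finite (tree_level N k)"
  unfolding tree_level_def by (rule finite_lists_length_eq) simp

lemma card_tree_level: "card (tree_level N k) = N ^ k"
  unfolding tree_level_def using card_lists_length_eq[of "{1..N}" k] by simp

lemma tree_level_0 [simp]: "tree_level N 0 = {[]}"
  unfolding tree_level_def by auto

lemma tree_level_subset_tree_V: "tree_level N k \<subseteq> tree_V N"
  unfolding tree_level_def tree_V_def by auto

lemma tree_V_append [simp]: "x @ y \<in> tree_V N \<longleftrightarrow> x \<in> tree_V N \<and> y \<in> tree_V N"
  unfolding tree_V_def by auto

lemma tree_V_Nil [simp]: "[] \<in> tree_V N"
  unfolding tree_V_def by auto

lemma tree_V_single [simp]: "[i] \<in> tree_V N \<longleftrightarrow> i \<in> {1..N}"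
  unfolding tree_V_def by auto

lemma butlast_in_tree_V: "x \<in> tree_V N \<Longrightarrow> butlast x \<in> tree_V N"
  unfolding tree_V_def by (auto dest: in_set_butlastD)

lemma tree_level_Suc_Cons: "tree_level N (Suc k) = (\<lambda>(i, t). i # t) ` ({1..N} \<times> tree_level N k)"
proof -
  have "\<exists>i\<in>{1..N}. \<exists>t'. set t' \<subseteq> {1..N} \<and> length t' = k \<and> t = i # t'"
    if "set t \<subseteq> {1..N}" "length t = Suc k" for t
    using that by (cases t) auto
  then show ?thesis unfolding tree_level_def by (auto simp: image_iff Bex_def)
qed

lemma tree_level_Suc_snoc: "tree_level N (Suc k) = (\<lambda>(t, i). t @ [i]) ` (tree_level N k \<times> {1..N})"
proof -
  have "\<exists>t'. set t' \<subseteq> {1..N} \<and> length t' = k \<and> (\<exists>i\<in>{1..N}. t = t' @ [i])"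
    if "set t \<subseteq> {1..N}" "length t = Suc k" for t
    using that by (cases t rule: rev_cases) auto
  then show ?thesis unfolding tree_level_def by (auto simp: image_iff Bex_def)
qed

lemma sum_tree_level_Suc_Cons:
  "(\<Sum>t\<in>tree_level N (Suc k). f t) = (\<Sum>i\<in>{1..N}. \<Sum>t\<in>tree_level N k. f (i # t))"
proof -
  have "inj_on (\<lambda>(i, t). i # t) ({1..N} \<times> tree_level N k)"
    by (auto simp: inj_on_def)
  then show ?thesis
    unfolding tree_level_Suc_Cons by (simp add: sum.reindex sum.cartesian_product split_def)
qed

lemma sum_tree_level_Suc_snoc:
  "(\<Sum>t\<in>tree_level N (Suc k). f t) = (\<Sum>t\<in>tree_level N k. \<Sum>i\<in>{1..N}. f (t @ [i]))"
proof -
  have "inj_on (\<lambda>(t, i). t @ [i]) (tree_level N k \<times> {1..N})"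
    by (auto simp: inj_on_def)
  then show ?thesis
    unfolding tree_level_Suc_snoc by (simp add: sum.reindex sum.cartesian_product split_def)
qed

lemma sum_tree_level_1: "(\<Sum>t\<in>tree_level N 1. f t) = (\<Sum>i\<in>{1..N}. f [i])"
  using sum_tree_level_Suc_snoc[where k=0] by simp

lemma tree_V_ball_eq: "{y \<in> tree_V N. length y < M} = (\<Union>n<M. tree_level N n)"
  unfolding tree_level_def tree_V_def by auto

lemma finite_tree_V_ball [simp]: "finite {y \<in> tree_V N. length y < M}"
  unfolding tree_V_ball_eq by simp

lemma sum_tree_V_ball:
  "(\<Sum>y\<in>{y \<in> tree_V N. length y < M}. f y) = (\<Sum>n<M. \<Sum>y\<in>tree_level N n. f y)"
  unfolding tree_V_ball_eq by (rule sum.UNION_disjoint) (simp_all, auto simp: tree_level_def)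

lemma sum_concat_tree_level:
  assumes "finite F"
  shows "(\<Sum>x\<in>F. \<Sum>t\<in>tree_level N k. f (x @ t))
       = (\<Sum>y\<in>(\<lambda>(x, t). x @ t) ` (F \<times> tree_level N k). f y)"
proof -
  have "inj_on (\<lambda>(x, t). x @ t) (F \<times> tree_level N k)"
    by (auto simp: inj_on_def tree_level_def)
  then show ?thesis using assms by (simp add: sum.reindex sum.cartesian_product split_def)
qed

definition l2_norm_sq :: "nat \<Rightarrow> (nat list \<Rightarrow> complex) \<Rightarrow> real" where
  "l2_norm_sq N f = infsum (\<lambda>w. (norm (f w))\<^sup>2) (tree_V N)"

lemma l2_norm_sq_nonneg: "l2_norm_sq N f \<ge> 0"
  unfolding l2_norm_sq_def by (rule infsum_nonneg) simp

lemma l2_norm_eq_sqrt: "l2_norm N f = sqrt (l2_norm_sq N f)"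
  unfolding l2_norm_def l2_norm_sq_def ..

lemma l2_vanishes_outside: "f \<in> l2 N \<Longrightarrow> x \<notin> tree_V N \<Longrightarrow> f x = 0"
  unfolding l2_def by auto

lemma sum_le_l2_norm_sq:
  assumes "f \<in> l2 N" "finite F" "F \<subseteq> tree_V N"
  shows "(\<Sum>x\<in>F. (norm (f x))\<^sup>2) \<le> l2_norm_sq N f"
  using assms unfolding l2_norm_sq_def l2_def by (intro finite_sum_le_infsum) auto

lemma l2I:
  assumes "\<And>x. x \<notin> tree_V N \<Longrightarrow> f x = 0"
    and "\<And>F. finite F \<Longrightarrow> F \<subseteq> tree_V N \<Longrightarrow> (\<Sum>x\<in>F. (norm (f x))\<^sup>2) \<le> B"
  shows "f \<in> l2 N" "l2_norm_sq N f \<le> B"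
proof -
  have summable: "(\<lambda>w. (norm (f w))\<^sup>2) summable_on tree_V N"
    by (rule nonneg_bdd_above_summable_on) (use assms(2) in \<open>auto simp: bdd_above_def\<close>)
  then show "f \<in> l2 N" unfolding l2_def using assms(1) by auto
  show "l2_norm_sq N f \<le> B"
    unfolding l2_norm_sq_def by (rule infsum_le_finite_sums[OF summable assms(2)])
qed

lemma l2I_balls:
  assumes "\<And>x. x \<notin> tree_V N \<Longrightarrow> f x = 0"
    and "\<And>M. (\<Sum>x\<in>{y \<in> tree_V N. length y < M}. (norm (f x))\<^sup>2) \<le> B"
  shows "f \<in> l2 N" "l2_norm_sq N f \<le> B"
proof -
  have bound: "(\<Sum>x\<in>F. (norm (f x))\<^sup>2) \<le> B" if F: "finite F" "F \<subseteq> tree_V N" for F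
  proof -
    define M where "M = Suc (Max (length ` F))"
    have "length x < M" if "x \<in> F" for x
      using F(1) that unfolding M_def by (simp add: le_imp_less_Suc)
    with F(2) have "F \<subseteq> {y \<in> tree_V N. length y < M}"
      by blast
    then have "(\<Sum>x\<in>F. (norm (f x))\<^sup>2) \<le> (\<Sum>x\<in>{y \<in> tree_V N. length y < M}. (norm (f x))\<^sup>2)"
      by (intro sum_mono2) auto
    with assms(2)[of M] show ?thesis by linarith
  qed
  show "f \<in> l2 N" "l2_norm_sq N f \<le> B"
    by (rule l2I[OF assms(1) bound]; assumption)+
qed

lemma l2_lin_comb:
  assumes f: "f \<in> l2 N" and g: "g \<in> l2 N"
  shows "(\<lambda>x. c * f x + d * g x) \<in> l2 N"
    "l2_norm_sq N (\<lambda>x. c * f x + d * g x) \<le> 2 * (norm c)\<^sup>2 * l2_norm_sq N f + 2 * (norm d)\<^sup>2 * l2_norm_sq N g"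
proof -
  have bound: "(\<Sum>x\<in>F. (norm (c * f x + d * g x))\<^sup>2)
          \<le> 2 * (norm c)\<^sup>2 * l2_norm_sq N f + 2 * (norm d)\<^sup>2 * l2_norm_sq N g"
    if "finite F" "F \<subseteq> tree_V N" for F
  proof -
    have "(\<Sum>x\<in>F. (norm (c * f x + d * g x))\<^sup>2)
        \<le> (\<Sum>x\<in>F. 2 * (norm c)\<^sup>2 * (norm (f x))\<^sup>2 + 2 * (norm d)\<^sup>2 * (norm (g x))\<^sup>2)"
      using norm_add_sq_le[of "c * f x" "d * g x" for x]
      by (intro sum_mono) (simp add: norm_mult power_mult_distrib mult.assoc)
    also have "\<dots> = 2 * (norm c)\<^sup>2 * (\<Sum>x\<in>F. (norm (f x))\<^sup>2) + 2 * (norm d)\<^sup>2 * (\<Sum>x\<in>F. (norm (g x))\<^sup>2)"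
      by (simp add: sum.distrib sum_distrib_left)
    also have "\<dots> \<le> 2 * (norm c)\<^sup>2 * l2_norm_sq N f + 2 * (norm d)\<^sup>2 * l2_norm_sq N g"
      using sum_le_l2_norm_sq[OF f that] sum_le_l2_norm_sq[OF g that]
      by (intro add_mono mult_left_mono) auto
    finally show ?thesis .
  qed
  have "\<And>x. x \<notin> tree_V N \<Longrightarrow> c * f x + d * g x = 0"
    using l2_vanishes_outside[OF f] l2_vanishes_outside[OF g] by simp
  from l2I[OF this bound] show "(\<lambda>x. c * f x + d * g x) \<in> l2 N"
    "l2_norm_sq N (\<lambda>x. c * f x + d * g x) \<le> 2 * (norm c)\<^sup>2 * l2_norm_sq N f + 2 * (norm d)\<^sup>2 * l2_norm_sq N g"
    by blast+
qed

lemma sum_descendants_le_l2_norm_sq: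
  assumes w: "w \<in> l2 N" and F: "finite F" "F \<subseteq> tree_V N"
  shows "(\<Sum>x\<in>F. \<Sum>t\<in>tree_level N k. (norm (w (x @ t)))\<^sup>2) \<le> l2_norm_sq N w"
proof -
  have "(\<Sum>x\<in>F. \<Sum>t\<in>tree_level N k. (norm (w (x @ t)))\<^sup>2)
      = (\<Sum>y\<in>(\<lambda>(x, t). x @ t) ` (F \<times> tree_level N k). (norm (w y))\<^sup>2)"
    by (rule sum_concat_tree_level[OF F(1)])
  also have "\<dots> \<le> l2_norm_sq N w"
    using F tree_level_subset_tree_V[of N k] by (intro sum_le_l2_norm_sq[OF w]) auto
  finally show ?thesis .
qed

lemma level_energy_tendsto_0:
  assumes "v \<in> l2 N"
  shows "(\<lambda>m. \<Sum>y\<in>tree_level N m. (norm (v y))\<^sup>2) \<longlonglongrightarrow> 0"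
proof -
  have "(\<Sum>m<M. \<Sum>y\<in>tree_level N m. (norm (v y))\<^sup>2) \<le> l2_norm_sq N v" for M
    unfolding sum_tree_V_ball[symmetric] by (rule sum_le_l2_norm_sq[OF assms]) auto
  then have "summable (\<lambda>m. \<Sum>y\<in>tree_level N m. (norm (v y))\<^sup>2)"
    by (intro summableI_nonneg_bounded[where x="l2_norm_sq N v"]) (auto intro: sum_nonneg)
  then show ?thesis by (rule summable_LIMSEQ_zero)
qed

lemma tree_laplacian_eq:
  assumes "x \<in> tree_V N"
  shows "tree_laplacian N v x = of_nat N * v x - (\<Sum>i\<in>{1..N}. v (x @ [i]))
           + (if x = [] then 0 else v x - v (butlast x))"
  using assms unfolding tree_laplacian_def by (simp add: sum_subtractf)

lemma tree_laplacian_lin_comb: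
  "tree_laplacian N (\<lambda>x. c * f x + d * g x) x = c * tree_laplacian N f x + d * tree_laplacian N g x"
  unfolding tree_laplacian_def by (simp add: sum.distrib sum_distrib_left algebra_simps sum_subtractf)

lemma tree_laplacian_diff:
  "tree_laplacian N (\<lambda>x. f x - g x) x = tree_laplacian N f x - tree_laplacian N g x"
  using tree_laplacian_lin_comb[of N 1 f "-1" g x] by simp

lemma sum_parents_le:
  assumes v: "v \<in> l2 N" and F: "finite F" "F \<subseteq> tree_V N"
  shows "(\<Sum>x\<in>F - {[]}. (norm (v (butlast x)))\<^sup>2) \<le> real N * l2_norm_sq N v"
proof -
  let ?P = "butlast ` (F - {[]})"
  let ?h = "\<lambda>x. (norm (v (butlast x)))\<^sup>2"
  have P: "finite ?P" "?P \<subseteq> tree_V N"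
    using F by (auto intro: butlast_in_tree_V)
  have "x \<in> (\<lambda>(y, t). y @ t) ` (?P \<times> tree_level N 1)" if "x \<in> F - {[]}" for x
  proof -
    have "set x \<subseteq> {1..N}" "x \<noteq> []"
      using that F(2) unfolding tree_V_def by auto
    then have "last x \<in> {1..N}"
      using last_in_set by blast
    then have "[last x] \<in> tree_level N 1"
      unfolding tree_level_def by simp
    then show ?thesis
      using that by (intro image_eqI[where x="(butlast x, [last x])"]) auto
  qed
  then have "(\<Sum>x\<in>F - {[]}. ?h x) \<le> (\<Sum>x\<in>(\<lambda>(y, t). y @ t) ` (?P \<times> tree_level N 1). ?h x)"
    using P by (intro sum_mono2) auto
  also have "\<dots> = (\<Sum>y\<in>?P. \<Sum>t\<in>tree_level N 1. ?h (y @ t))"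
    by (rule sum_concat_tree_level[OF P(1), symmetric])
  also have "\<dots> = (\<Sum>y\<in>?P. real N * (norm (v y))\<^sup>2)"
    unfolding sum_tree_level_1 by simp
  also have "\<dots> \<le> real N * l2_norm_sq N v"
    unfolding sum_distrib_left[symmetric] by (intro mult_left_mono sum_le_l2_norm_sq[OF v P]) auto
  finally show ?thesis .
qed

lemma norm_tree_laplacian_sq_le:
  assumes x: "x \<in> tree_V N"
  shows "(norm (tree_laplacian N v x))\<^sup>2
    \<le> 4 * ((real N)\<^sup>2 * (norm (v x))\<^sup>2 + real N * (\<Sum>i\<in>{1..N}. (norm (v (x @ [i])))\<^sup>2)
           + (norm (v x))\<^sup>2 + (if x = [] then 0 else (norm (v (butlast x)))\<^sup>2))"
proof -
  define C where "C = (if x = [] then 0 else norm (v x))"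
  define D where "D = (if x = [] then 0 else norm (v (butlast x)))"
  define E where "E = (if x = [] then 0 else v x - v (butlast x))"
  have "norm (tree_laplacian N v x) \<le> norm (of_nat N * v x - (\<Sum>i\<in>{1..N}. v (x @ [i]))) + norm E"
    unfolding tree_laplacian_eq[OF x] E_def by (rule norm_triangle_ineq)
  moreover have "norm (of_nat N * v x - (\<Sum>i\<in>{1..N}. v (x @ [i])))
      \<le> norm (of_nat N * v x) + norm (\<Sum>i\<in>{1..N}. v (x @ [i]))"
    by (rule norm_triangle_ineq4)
  moreover have "norm E \<le> C + D"
    unfolding E_def C_def D_def by (auto intro: norm_triangle_ineq4)
  ultimately have "(norm (tree_laplacian N v x))\<^sup>2
      \<le> (norm (of_nat N * v x) + norm (\<Sum>i\<in>{1..N}. v (x @ [i])) + C + D)\<^sup>2"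
    by (intro power_mono) auto
  also have "\<dots> \<le> 4 * ((norm (of_nat N * v x))\<^sup>2 + (norm (\<Sum>i\<in>{1..N}. v (x @ [i])))\<^sup>2 + C\<^sup>2 + D\<^sup>2)"
    by (rule square_sum4_le)
  also have "\<dots> \<le> 4 * ((real N)\<^sup>2 * (norm (v x))\<^sup>2 + real N * (\<Sum>i\<in>{1..N}. (norm (v (x @ [i])))\<^sup>2)
      + (norm (v x))\<^sup>2 + (if x = [] then 0 else (norm (v (butlast x)))\<^sup>2))"
  proof -
    have "(norm (\<Sum>i\<in>{1..N}. v (x @ [i])))\<^sup>2 \<le> real N * (\<Sum>i\<in>{1..N}. (norm (v (x @ [i])))\<^sup>2)"
      using norm_sum_sq_le_card[of "\<lambda>i. v (x @ [i])" "{1..N}"] by simp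
    moreover have "C\<^sup>2 \<le> (norm (v x))\<^sup>2" "D\<^sup>2 = (if x = [] then 0 else (norm (v (butlast x)))\<^sup>2)"
      unfolding C_def D_def by auto
    moreover have "(norm (of_nat N * v x))\<^sup>2 = (real N)\<^sup>2 * (norm (v x))\<^sup>2"
      by (simp add: norm_mult power_mult_distrib)
    ultimately show ?thesis by (smt (verit))
  qed
  finally show ?thesis .
qed

lemma tree_laplacian_l2:
  assumes v: "v \<in> l2 N"
  shows "tree_laplacian N v \<in> l2 N"
proof (rule l2I(1))
  show "\<And>x. x \<notin> tree_V N \<Longrightarrow> tree_laplacian N v x = 0"
    by (simp add: tree_laplacian_def)
  fix F assume F: "finite F" "F \<subseteq> tree_V N"
  have "(\<Sum>x\<in>F. (norm (v x))\<^sup>2) \<le> l2_norm_sq N v"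
    by (rule sum_le_l2_norm_sq[OF v F])
  moreover have "(\<Sum>x\<in>F. \<Sum>i\<in>{1..N}. (norm (v (x @ [i])))\<^sup>2) \<le> l2_norm_sq N v"
    using sum_descendants_le_l2_norm_sq[OF v F, of 1] unfolding sum_tree_level_1 .
  moreover have "(\<Sum>x\<in>F. if x = [] then 0 else (norm (v (butlast x)))\<^sup>2)
      = (\<Sum>x\<in>F - {[]}. (norm (v (butlast x)))\<^sup>2)"
    using F(1) by (intro sum.mono_neutral_cong_right) auto
  with sum_parents_le[OF v F]
  have "(\<Sum>x\<in>F. if x = [] then 0 else (norm (v (butlast x)))\<^sup>2) \<le> real N * l2_norm_sq N v"
    by simp
  ultimately have "(\<Sum>x\<in>F. 4 * ((real N)\<^sup>2 * (norm (v x))\<^sup>2 + real N * (\<Sum>i\<in>{1..N}. (norm (v (x @ [i])))\<^sup>2)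
      + (norm (v x))\<^sup>2 + (if x = [] then 0 else (norm (v (butlast x)))\<^sup>2)))
    \<le> 4 * ((real N)\<^sup>2 * l2_norm_sq N v + real N * l2_norm_sq N v + l2_norm_sq N v + real N * l2_norm_sq N v)"
    unfolding sum.distrib sum_distrib_left[symmetric] by (intro add_mono mult_left_mono) auto
  then show "(\<Sum>x\<in>F. (norm (tree_laplacian N v x))\<^sup>2)
    \<le> 4 * ((real N)\<^sup>2 * l2_norm_sq N v + real N * l2_norm_sq N v + l2_norm_sq N v + real N * l2_norm_sq N v)"
    using F norm_tree_laplacian_sq_le[of _ N v] by (smt (verit) subsetD sum_mono)
qed

lemma tree_laplacian_shift_l2:
  assumes "v \<in> l2 N"
  shows "(\<lambda>x. tree_laplacian N v x - \<mu> * v x) \<in> l2 N"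
  using l2_lin_comb(1)[OF tree_laplacian_l2[OF assms] assms, of 1 "- \<mu>"] by simp

section \<open>Absence of eigenvalues\<close>

definition descendant_sum :: "nat \<Rightarrow> (nat list \<Rightarrow> complex) \<Rightarrow> nat list \<Rightarrow> nat \<Rightarrow> complex" where
  "descendant_sum N v x k = (\<Sum>t\<in>tree_level N k. v (x @ t))"

lemma descendant_sum_0 [simp]: "descendant_sum N v x 0 = v x"
  by (simp add: descendant_sum_def)

lemma descendant_sum_1: "descendant_sum N v x (Suc 0) = (\<Sum>i\<in>{1..N}. v (x @ [i]))"
  using sum_tree_level_1 unfolding descendant_sum_def by simp

lemma descendant_sum_Suc: "descendant_sum N v x (Suc k) = (\<Sum>i\<in>{1..N}. descendant_sum N v (x @ [i]) k)"
  unfolding descendant_sum_def by (subst sum_tree_level_Suc_Cons) simp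

lemma norm_descendant_sum_sq_le:
  "(norm (descendant_sum N v x k))\<^sup>2 \<le> real N ^ k * (\<Sum>t\<in>tree_level N k. (norm (v (x @ t)))\<^sup>2)"
  unfolding descendant_sum_def using norm_sum_sq_le_card[of "\<lambda>t. v (x @ t)" "tree_level N k"]
  by (simp add: card_tree_level)

lemma norm_descendant_sum_le:
  "norm (descendant_sum N v x k) \<le> sqrt (real N) ^ k * sqrt (\<Sum>t\<in>tree_level N k. (norm (v (x @ t)))\<^sup>2)"
  using real_le_rsqrt[OF norm_descendant_sum_sq_le] by (simp add: real_sqrt_mult real_sqrt_power)

lemma sum_subtree_level_le_l2_norm_sq:
  assumes "v \<in> l2 N" "x \<in> tree_V N"
  shows "(\<Sum>t\<in>tree_level N k. (norm (v (x @ t)))\<^sup>2) \<le> l2_norm_sq N v"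
  using sum_descendants_le_l2_norm_sq[OF assms(1), of "{x}"] assms(2) by simp

text \<open>Scaled by \<open>\<surd>N ^ k\<close>, descendant sums of an \<open>l\<^sup>2\<close> function are bounded by the energy on level
  \<open>length x + k\<close>, which tends to \<open>0\<close>.\<close>
lemma scaled_descendant_sum_tendsto_0:
  assumes N: "N \<ge> 1" and v: "v \<in> l2 N" and x: "x \<in> tree_V N"
  shows "(\<lambda>k. descendant_sum N v x k / complex_of_real (sqrt (real N)) ^ k) \<longlonglongrightarrow> 0"
proof (rule Lim_null_comparison)
  let ?L = "\<lambda>m. \<Sum>y\<in>tree_level N m. (norm (v y))\<^sup>2"
  show "\<forall>\<^sub>F k in sequentially.
      norm (descendant_sum N v x k / complex_of_real (sqrt (real N)) ^ k) \<le> sqrt (?L (length x + k))"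
  proof (rule always_eventually, rule allI)
    fix k
    have "(\<Sum>t\<in>tree_level N k. (norm (v (x @ t)))\<^sup>2)
        = (\<Sum>y\<in>(\<lambda>(x, t). x @ t) ` ({x} \<times> tree_level N k). (norm (v y))\<^sup>2)"
      using sum_concat_tree_level[where F="{x}" and f="\<lambda>y. (norm (v y))\<^sup>2"] by simp
    also have "\<dots> \<le> ?L (length x + k)"
      using x by (intro sum_mono2 finite_tree_level) (auto simp: tree_level_def tree_V_def subset_iff)
    finally have "(\<Sum>t\<in>tree_level N k. (norm (v (x @ t)))\<^sup>2) \<le> ?L (length x + k)" .
    then have "(norm (descendant_sum N v x k))\<^sup>2 \<le> real N ^ k * ?L (length x + k)"
      using norm_descendant_sum_sq_le[of N v x k]
      by (meson mult_left_mono order.trans zero_le_power of_nat_0_le_iff)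
    moreover have "(sqrt (real N) ^ k)\<^sup>2 = real N ^ k"
      by (simp add: power2_eq_square flip: power_mult_distrib)
    then have "(norm (descendant_sum N v x k / complex_of_real (sqrt (real N)) ^ k))\<^sup>2
        = (norm (descendant_sum N v x k))\<^sup>2 / real N ^ k"
      by (simp add: norm_divide norm_power power_divide)
    ultimately show "norm (descendant_sum N v x k / complex_of_real (sqrt (real N)) ^ k)
        \<le> sqrt (?L (length x + k))"
      using N by (intro real_le_rsqrt) (simp add: divide_le_eq mult.commute)
  qed
  have "(\<lambda>k. ?L (length x + k)) \<longlonglongrightarrow> 0"
    using LIMSEQ_ignore_initial_segment[OF level_energy_tendsto_0[OF v], of "length x"]
    by (simp add: add.commute)
  then show "(\<lambda>k. sqrt (?L (length x + k))) \<longlonglongrightarrow> 0"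
    using tendsto_real_sqrt by fastforce
qed

lemma descendant_sum_recurrence:
  assumes eig: "\<And>y. y \<in> tree_V N \<Longrightarrow> y \<noteq> [] \<Longrightarrow> tree_laplacian N v y = \<mu> * v y"
    and x: "x \<in> tree_V N"
  shows "descendant_sum N v x (Suc (Suc k))
       = (of_nat N + 1 - \<mu>) * descendant_sum N v x (Suc k) - of_nat N * descendant_sum N v x k"
proof -
  have children: "(\<Sum>i\<in>{1..N}. v (x @ t @ [i])) = (of_nat N + 1 - \<mu>) * v (x @ t) - v (x @ butlast t)"
    if "t \<in> tree_level N (Suc k)" for t
  proof -
    have t: "t \<noteq> []" "t \<in> tree_V N"
      using that tree_level_subset_tree_V[of N "Suc k"] by (auto simp: tree_level_def)
    then have "tree_laplacian N v (x @ t) = \<mu> * v (x @ t)"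
      using eig x by auto
    then show ?thesis
      using t x by (simp add: tree_laplacian_eq butlast_append algebra_simps)
  qed
  have "descendant_sum N v x (Suc (Suc k)) = (\<Sum>t\<in>tree_level N (Suc k). \<Sum>i\<in>{1..N}. v (x @ t @ [i]))"
    unfolding descendant_sum_def by (subst sum_tree_level_Suc_snoc) simp
  also have "\<dots> = (\<Sum>t\<in>tree_level N (Suc k). (of_nat N + 1 - \<mu>) * v (x @ t) - v (x @ butlast t))"
    by (rule sum.cong[OF refl children])
  also have "\<dots> = (of_nat N + 1 - \<mu>) * descendant_sum N v x (Suc k)
                   - (\<Sum>t\<in>tree_level N (Suc k). v (x @ butlast t))"
    unfolding descendant_sum_def by (simp add: sum_subtractf sum_distrib_left)
  also have "(\<Sum>t\<in>tree_level N (Suc k). v (x @ butlast t)) = of_nat N * descendant_sum N v x k"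
    unfolding descendant_sum_def by (subst sum_tree_level_Suc_snoc) (simp add: sum_distrib_left)
  finally show ?thesis .
qed

lemma eigenfunction_children_sum:
  assumes N: "N \<ge> 1" and v: "v \<in> l2 N" and eig: "\<And>x. tree_laplacian N v x = \<mu> * v x"
    and r: "r \<noteq> 0" "norm r \<le> 1"
    and \<mu>: "of_nat N + 1 - \<mu> = complex_of_real (sqrt (real N)) * (r + inverse r)"
    and x: "x \<in> tree_V N"
  shows "(\<Sum>i\<in>{1..N}. v (x @ [i])) = r * complex_of_real (sqrt (real N)) * v x"
    "norm r = 1 \<Longrightarrow> v x = 0"
proof -
  define s where "s = complex_of_real (sqrt (real N))"
  have s: "s \<noteq> 0" "s\<^sup>2 = of_nat N"
    using N unfolding s_def by (simp_all flip: of_real_power)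
  define b where "b k = descendant_sum N v x k / s ^ k" for k
  have "b (Suc (Suc k)) = (r + inverse r) * b (Suc k) - b k" for k
  proof -
    have "b (Suc (Suc k)) = (s * (r + inverse r) * descendant_sum N v x (Suc k)
        - s\<^sup>2 * descendant_sum N v x k) / s ^ Suc (Suc k)"
      unfolding b_def descendant_sum_recurrence[OF eig x] \<mu>[folded s_def] s(2) ..
    also have "\<dots> = (r + inverse r) * b (Suc k) - b k"
      unfolding b_def using s(1) by (simp add: field_simps power2_eq_square)
    finally show ?thesis .
  qed
  moreover have "b \<longlonglongrightarrow> 0"
    unfolding b_def s_def by (rule scaled_descendant_sum_tendsto_0[OF N v x])
  ultimately have "b 1 = r * b 0" "norm r = 1 \<Longrightarrow> b 0 = 0"
    using decaying_solution_of_recurrence[OF _ _ r] by blast+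
  then show "(\<Sum>i\<in>{1..N}. v (x @ [i])) = r * s * v x" "norm r = 1 \<Longrightarrow> v x = 0"
    using s(1) by (auto simp: b_def descendant_sum_1 field_simps)
qed

text \<open>For \<open>\<bar>r\<bar> < 1\<close>, \<open>v\<close> is geometric with ratio \<open>r / \<surd>N\<close> along every branch, and the equation at the
  root then forces \<open>v [] = 0\<close>.\<close>
lemma eigenfunction_eq_0_inside_disc:
  assumes N: "N \<ge> 1" and v: "v \<in> l2 N" and eig: "\<And>x. tree_laplacian N v x = \<mu> * v x"
    and r: "r \<noteq> 0" "norm r < 1"
    and \<mu>: "of_nat N + 1 - \<mu> = complex_of_real (sqrt (real N)) * (r + inverse r)"
    and x: "x \<in> tree_V N"
  shows "v x = 0"
proof -
  define s where "s = complex_of_real (sqrt (real N))"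
  have s: "s \<noteq> 0" "norm s \<ge> 1"
    using N unfolding s_def by auto
  note children = eigenfunction_children_sum(1)[OF N v eig r(1) less_imp_le[OF r(2)] \<mu>, folded s_def]
  note \<mu> = \<mu>[folded s_def]
  have step: "v (y @ [j]) = (r / s) * v y" if y: "y \<in> tree_V N" and j: "j \<in> {1..N}" for y j
  proof -
    have yj: "y @ [j] \<in> tree_V N" using y j by simp
    have "of_nat N * v (y @ [j]) - r * s * v (y @ [j]) + (v (y @ [j]) - v y) = \<mu> * v (y @ [j])"
      using eig[of "y @ [j]"] unfolding tree_laplacian_eq[OF yj] children[OF yj] by simp
    then have "(of_nat N + 1 - \<mu> - r * s) * v (y @ [j]) = v y"
      by (simp add: algebra_simps)
    then have "(s / r) * v (y @ [j]) = v y"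
      using r(1) unfolding \<mu> by (simp add: field_simps)
    then show ?thesis using r(1) s(1) by (simp add: field_simps)
  qed
  have "of_nat N * v [] - r * s * v [] = \<mu> * v []"
    using eig[of "[]"] unfolding tree_laplacian_eq[OF tree_V_Nil] children[OF tree_V_Nil] by simp
  then have "(of_nat N + 1 - \<mu> - r * s - 1) * v [] = 0"
    by (simp add: algebra_simps)
  then have "(s - r) * v [] = 0"
    using r(1) unfolding \<mu> by (simp add: field_simps)
  moreover have "s \<noteq> r"
    using s(2) r(2) by auto
  ultimately have "v [] = 0"
    by simp
  show ?thesis using x
  proof (induction x rule: rev_induct)
    case (snoc j y)
    then show ?case using step[of y j] \<open>v [] = 0\<close> by simp
  qed (use \<open>v [] = 0\<close> in simp)
qed

lemma l2_eigenfunction_eq_0: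
  assumes N: "N \<ge> 1" and v: "v \<in> l2 N" and eig: "\<And>x. tree_laplacian N v x = \<mu> * v x"
  shows "v = (\<lambda>_. 0)"
proof -
  define s where "s = complex_of_real (sqrt (real N))"
  have "s \<noteq> 0"
    using N unfolding s_def by auto
  obtain r where r: "r \<noteq> 0" "norm r \<le> 1" "(of_nat N + 1 - \<mu>) / s = r + inverse r"
    using obtain_joukowski_preimage by metis
  have \<mu>: "of_nat N + 1 - \<mu> = complex_of_real (sqrt (real N)) * (r + inverse r)"
    using r(3) \<open>s \<noteq> 0\<close> unfolding s_def by (simp add: field_simps)
  have "v x = 0" if x: "x \<in> tree_V N" for x
  proof (cases "norm r = 1")
    case True
    then show ?thesis
      using eigenfunction_children_sum(2)[OF N v eig r(1,2) \<mu> x] by blast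
  next
    case False
    then show ?thesis
      using r(2) eigenfunction_eq_0_inside_disc[OF N v eig r(1) _ \<mu> x] by simp
  qed
  then show ?thesis using l2_vanishes_outside[OF v] by auto
qed

section \<open>The interval lies in the spectrum\<close>

definition radial :: "nat \<Rightarrow> (nat \<Rightarrow> complex) \<Rightarrow> nat list \<Rightarrow> complex" where
  "radial N \<phi> x = (if x \<in> tree_V N then \<phi> (length x) else 0)"

definition radial_laplacian :: "nat \<Rightarrow> (nat \<Rightarrow> complex) \<Rightarrow> nat \<Rightarrow> complex" where
  "radial_laplacian N \<phi> n = of_nat N * (\<phi> n - \<phi> (Suc n)) + (if n = 0 then 0 else \<phi> n - \<phi> (n - 1))"

lemma tree_laplacian_radial: "tree_laplacian N (radial N \<phi>) = radial N (radial_laplacian N \<phi>)"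
proof
  fix x
  show "tree_laplacian N (radial N \<phi>) x = radial N (radial_laplacian N \<phi>) x"
  proof (cases "x \<in> tree_V N")
    case True
    have "(\<Sum>i\<in>{1..N}. radial N \<phi> (x @ [i])) = (\<Sum>i\<in>{1..N}. \<phi> (Suc (length x)))"
      using True by (intro sum.cong refl) (simp add: radial_def)
    moreover have "x \<noteq> [] \<Longrightarrow> radial N \<phi> (butlast x) = \<phi> (length x - 1)"
      using butlast_in_tree_V[OF True] by (simp add: radial_def)
    ultimately show ?thesis
      using True by (simp add: tree_laplacian_eq radial_def radial_laplacian_def algebra_simps)
  qed (simp add: tree_laplacian_def radial_def)
qed

lemma sum_radial_ball:
  "(\<Sum>y\<in>{y \<in> tree_V N. length y < M}. (norm (radial N \<phi> y))\<^sup>2) = (\<Sum>n<M. real N ^ n * (norm (\<phi> n))\<^sup>2)"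
proof -
  have "(\<Sum>y\<in>tree_level N n. (norm (radial N \<phi> y))\<^sup>2) = real N ^ n * (norm (\<phi> n))\<^sup>2" for n
  proof -
    have "(\<Sum>y\<in>tree_level N n. (norm (radial N \<phi> y))\<^sup>2) = (\<Sum>y\<in>tree_level N n. (norm (\<phi> n))\<^sup>2)"
      by (rule sum.cong) (auto simp: radial_def tree_level_def tree_V_def)
    then show ?thesis by (simp add: card_tree_level)
  qed
  then show ?thesis unfolding sum_tree_V_ball by simp
qed

lemma radial_l2_finite_support:
  assumes "\<And>n. n \<ge> M \<Longrightarrow> \<phi> n = 0"
  shows "radial N \<phi> \<in> l2 N" "l2_norm_sq N (radial N \<phi>) = (\<Sum>n<M. real N ^ n * (norm (\<phi> n))\<^sup>2)"
proof -
  let ?B = "(\<Sum>n<M. real N ^ n * (norm (\<phi> n))\<^sup>2)"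
  have "(\<Sum>n<M'. real N ^ n * (norm (\<phi> n))\<^sup>2) \<le> ?B" for M'
  proof -
    have "(\<Sum>n<M'. real N ^ n * (norm (\<phi> n))\<^sup>2) \<le> (\<Sum>n<max M M'. real N ^ n * (norm (\<phi> n))\<^sup>2)"
      by (intro sum_mono2) auto
    also have "\<dots> = ?B"
      using assms by (intro sum.mono_neutral_right) auto
    finally show ?thesis .
  qed
  then have "(\<Sum>x\<in>{y \<in> tree_V N. length y < M'}. (norm (radial N \<phi> x))\<^sup>2) \<le> ?B" for M'
    unfolding sum_radial_ball .
  moreover have "\<And>x. x \<notin> tree_V N \<Longrightarrow> radial N \<phi> x = 0"
    by (simp add: radial_def)
  ultimately have l2: "radial N \<phi> \<in> l2 N" and le: "l2_norm_sq N (radial N \<phi>) \<le> ?B"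
    using l2I_balls by blast+
  have "?B \<le> l2_norm_sq N (radial N \<phi>)"
    unfolding sum_radial_ball[symmetric] by (intro sum_le_l2_norm_sq[OF l2]) auto
  with l2 le show "radial N \<phi> \<in> l2 N" "l2_norm_sq N (radial N \<phi>) = ?B"
    by auto
qed

text \<open>A bounded inverse of \<open>\<Delta> - \<mu>\<close> rules out approximate eigenvectors.\<close>
lemma in_tree_spectrumI:
  assumes "\<And>C. \<exists>v\<in>l2 N. C * l2_norm_sq N (\<lambda>x. tree_laplacian N v x - \<mu> * v x) < l2_norm_sq N v"
  shows "\<mu> \<in> tree_spectrum N"
  unfolding tree_spectrum_def
proof (clarify)
  fix S C
  assume bounded: "\<forall>v\<in>l2 N. l2_norm N (S v) \<le> C * l2_norm N v"
    and left: "\<forall>v\<in>l2 N. S (\<lambda>x. tree_laplacian N v x - \<mu> * v x) = v"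
  obtain v where v: "v \<in> l2 N"
    and less: "C\<^sup>2 * l2_norm_sq N (\<lambda>x. tree_laplacian N v x - \<mu> * v x) < l2_norm_sq N v"
    using assms by blast
  let ?w = "\<lambda>x. tree_laplacian N v x - \<mu> * v x"
  have nonneg: "0 \<le> l2_norm_sq N ?w" "0 \<le> l2_norm_sq N v"
    by (rule l2_norm_sq_nonneg)+
  have "sqrt (l2_norm_sq N v) \<le> C * sqrt (l2_norm_sq N ?w)"
    using bounded left v tree_laplacian_shift_l2[OF v] by (metis l2_norm_eq_sqrt)
  also have "\<dots> \<le> \<bar>C\<bar> * sqrt (l2_norm_sq N ?w)"
    using nonneg by (intro mult_right_mono) auto
  finally have "(sqrt (l2_norm_sq N v))\<^sup>2 \<le> (\<bar>C\<bar> * sqrt (l2_norm_sq N ?w))\<^sup>2"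
    using nonneg by (intro power_mono) auto
  then have "l2_norm_sq N v \<le> C\<^sup>2 * l2_norm_sq N ?w"
    using nonneg by (simp add: power_mult_distrib)
  with less show False
    by linarith
qed

lemma scaled_norm_power_sq:
  assumes "N \<ge> 1" "norm \<omega> = 1"
  shows "real N ^ n * (norm ((\<omega> / complex_of_real (sqrt (real N))) ^ m))\<^sup>2 = real N ^ n / real N ^ m"
proof -
  have "(norm ((\<omega> / complex_of_real (sqrt (real N))) ^ m))\<^sup>2
      = ((norm (\<omega> / complex_of_real (sqrt (real N))))\<^sup>2) ^ m"
    by (simp only: norm_power power_mult[symmetric] mult.commute)
  also have "\<dots> = (1 / real N) ^ m"
    using assms by (simp add: norm_divide power_divide)
  finally show ?thesis by (simp add: power_one_over)
qed

text \<open>The radial function \<open>z ^ n\<close> solves the eigenvalue equation away from the root.\<close>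
lemma plane_wave_equation:
  fixes \<omega> \<mu> :: complex
  assumes N: "N \<ge> 1" and "\<omega> \<noteq> 0"
    and \<mu>: "of_nat N + 1 - \<mu> = complex_of_real (sqrt (real N)) * (\<omega> + inverse \<omega>)"
  defines "z \<equiv> \<omega> / complex_of_real (sqrt (real N))"
  shows "(of_nat N + 1 - \<mu>) * z ^ Suc n - of_nat N * z ^ Suc (Suc n) - z ^ n = 0"
proof -
  define s where "s = complex_of_real (sqrt (real N))"
  have s: "s \<noteq> 0" "s\<^sup>2 = of_nat N"
    using N unfolding s_def by (simp_all flip: of_real_power)
  have "(of_nat N + 1 - \<mu>) * z ^ Suc n - of_nat N * z ^ Suc (Suc n) - z ^ n
      = s * (\<omega> + inverse \<omega>) * z ^ Suc n - s\<^sup>2 * z ^ Suc (Suc n) - z ^ n"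
    by (simp only: \<mu>[folded s_def] s(2))
  also have "\<dots> = z ^ n * ((\<omega> + inverse \<omega>) * \<omega> - \<omega> * \<omega> - 1)"
    unfolding z_def s_def[symmetric] using s(1) \<open>\<omega> \<noteq> 0\<close> by (simp add: field_simps power2_eq_square)
  also have "\<dots> = 0"
    using \<open>\<omega> \<noteq> 0\<close> by (simp add: field_simps)
  finally show ?thesis .
qed

lemma plane_wave_residual:
  fixes \<omega> \<mu> :: complex
  assumes N: "N \<ge> 1" and \<omega>: "norm \<omega> = 1" and M: "M \<ge> 2"
    and \<mu>: "of_nat N + 1 - \<mu> = complex_of_real (sqrt (real N)) * (\<omega> + inverse \<omega>)"
  defines "z \<equiv> \<omega> / complex_of_real (sqrt (real N))"
  defines "\<phi> \<equiv> \<lambda>n. if n < M then z ^ n else 0"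
  shows "real N ^ n * (norm (radial_laplacian N \<phi> n - \<mu> * \<phi> n))\<^sup>2
    \<le> (if n = 0 then (norm (of_nat N - of_nat N * z - \<mu>))\<^sup>2 else 0)
      + (if n = M - 1 then real N else 0) + (if n = M then real N else 0)"
proof -
  have scaled_z_power: "real N ^ n * (norm (z ^ m))\<^sup>2 = real N ^ n / real N ^ m" for n m
    unfolding z_def by (rule scaled_norm_power_sq[OF N \<omega>])
  have "\<omega> \<noteq> 0"
    using \<omega> by auto
  note wave = plane_wave_equation[OF N this \<mu>, folded z_def]
  have residual_Suc: "radial_laplacian N \<phi> (Suc n) - \<mu> * \<phi> (Suc n)
      = (of_nat N + 1 - \<mu>) * \<phi> (Suc n) - of_nat N * \<phi> (Suc (Suc n)) - \<phi> n" for n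
    unfolding radial_laplacian_def by (simp add: algebra_simps)
  show ?thesis
  proof (cases n)
    case 0
    then show ?thesis using M by (simp add: radial_laplacian_def \<phi>_def algebra_simps)
  next
    case (Suc m)
    consider "Suc (Suc m) < M" | "Suc (Suc m) = M" | "Suc m = M" | "Suc m > M" by linarith
    then show ?thesis
    proof cases
      case 1
      then show ?thesis unfolding Suc residual_Suc using wave[of m] by (simp add: \<phi>_def)
    next
      case 2
      then have "radial_laplacian N \<phi> n - \<mu> * \<phi> n = of_nat N * z ^ Suc (Suc m)"
        unfolding Suc residual_Suc using wave[of m] by (simp add: \<phi>_def algebra_simps)
      then have "real N ^ n * (norm (radial_laplacian N \<phi> n - \<mu> * \<phi> n))\<^sup>2
          = real N ^ 2 * (real N ^ n * (norm (z ^ Suc (Suc m)))\<^sup>2)"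
        by (simp add: norm_mult power_mult_distrib)
      also have "\<dots> = real N" unfolding scaled_z_power Suc using N by (simp add: power2_eq_square)
      finally have eq: "real N ^ n * (norm (radial_laplacian N \<phi> n - \<mu> * \<phi> n))\<^sup>2 = real N" .
      show ?thesis using 2 Suc by (subst eq) simp
    next
      case 3
      then have "radial_laplacian N \<phi> n - \<mu> * \<phi> n = - (z ^ m)"
        unfolding Suc residual_Suc by (simp add: \<phi>_def)
      then have "real N ^ n * (norm (radial_laplacian N \<phi> n - \<mu> * \<phi> n))\<^sup>2 = real N"
        using scaled_z_power[of n m] N unfolding Suc by simp
      then show ?thesis using 3 Suc M by simp
    next
      case 4
      then show ?thesis unfolding Suc residual_Suc by (simp add: \<phi>_def)
    qed
  qed
qed

lemma truncated_plane_wave: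
  fixes \<omega> \<mu> :: complex
  assumes N: "N \<ge> 1" and \<omega>: "norm \<omega> = 1" and M: "M \<ge> 2"
    and \<mu>: "of_nat N + 1 - \<mu> = complex_of_real (sqrt (real N)) * (\<omega> + inverse \<omega>)"
  defines "z \<equiv> \<omega> / complex_of_real (sqrt (real N))"
  defines "v \<equiv> radial N (\<lambda>n. if n < M then z ^ n else 0)"
  shows "v \<in> l2 N" "l2_norm_sq N v = real M"
    "l2_norm_sq N (\<lambda>x. tree_laplacian N v x - \<mu> * v x)
       \<le> (norm (of_nat N - of_nat N * z - \<mu>))\<^sup>2 + 2 * real N"
proof -
  define \<phi> where "\<phi> n = (if n < M then z ^ n else 0)" for n
  define \<psi> where "\<psi> n = radial_laplacian N \<phi> n - \<mu> * \<phi> n" for n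
  have v: "v = radial N \<phi>"
    unfolding v_def \<phi>_def ..
  have "(\<lambda>x. tree_laplacian N v x - \<mu> * v x) = radial N \<psi>"
    unfolding v tree_laplacian_radial by (auto simp: radial_def \<psi>_def)
  moreover have "\<psi> n = 0" if "n \<ge> Suc M" for n
    using that unfolding \<psi>_def \<phi>_def radial_laplacian_def by simp
  ultimately have residual: "l2_norm_sq N (\<lambda>x. tree_laplacian N v x - \<mu> * v x)
      = (\<Sum>n<Suc M. real N ^ n * (norm (\<psi> n))\<^sup>2)"
    using radial_l2_finite_support(2) by metis
  have "real N ^ n * (norm (\<phi> n))\<^sup>2 = 1" if "n < M" for n
    using that scaled_norm_power_sq[OF N \<omega>, of n n] N by (simp add: \<phi>_def z_def)
  moreover have "\<phi> n = 0" if "n \<ge> M" for n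
    using that by (simp add: \<phi>_def)
  ultimately show "v \<in> l2 N" "l2_norm_sq N v = real M"
    unfolding v using radial_l2_finite_support[of M \<phi> N] by simp_all
  have "(\<Sum>n<Suc M. real N ^ n * (norm (\<psi> n))\<^sup>2)
      \<le> (\<Sum>n<Suc M. (if n = 0 then (norm (of_nat N - of_nat N * z - \<mu>))\<^sup>2 else 0)
            + (if n = M - 1 then real N else 0) + (if n = M then real N else 0))"
    using plane_wave_residual[OF N \<omega> M \<mu>] unfolding \<psi>_def \<phi>_def z_def by (intro sum_mono) blast
  also have "\<dots> = (norm (of_nat N - of_nat N * z - \<mu>))\<^sup>2 + 2 * real N"
    using M by (simp add: sum.distrib)
  finally show "l2_norm_sq N (\<lambda>x. tree_laplacian N v x - \<mu> * v x)
      \<le> (norm (of_nat N - of_nat N * z - \<mu>))\<^sup>2 + 2 * real N"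
    unfolding residual .
qed

lemma interval_subset_tree_spectrum:
  assumes N: "N \<ge> 1"
    and t: "t \<in> {real N + 1 - 2 * sqrt (real N) .. real N + 1 + 2 * sqrt (real N)}"
  shows "complex_of_real t \<in> tree_spectrum N"
proof -
  define l where "l = (real N + 1 - t) / sqrt (real N)"
  have "\<bar>l\<bar> \<le> 2"
    using t N unfolding l_def by (auto simp: abs_div divide_le_eq)
  then have "l\<^sup>2 \<le> 4"
    using abs_le_square_iff[of l 2] by simp
  define \<omega> where "\<omega> = Complex (l / 2) (sqrt (1 - l\<^sup>2 / 4))"
  have \<omega>: "norm \<omega> = 1"
    using \<open>l\<^sup>2 \<le> 4\<close> unfolding \<omega>_def complex_norm by (simp add: power_divide)
  then have "inverse \<omega> = cnj \<omega>"
    using complex_norm_square[of \<omega>] by (intro inverse_unique) simp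
  then have "\<omega> + inverse \<omega> = complex_of_real l"
    by (simp add: complex_add_cnj \<omega>_def)
  then have \<mu>: "of_nat N + 1 - complex_of_real t = complex_of_real (sqrt (real N)) * (\<omega> + inverse \<omega>)"
    using N by (simp add: l_def flip: of_real_mult)
  define K where "K = (norm (of_nat N - of_nat N * (\<omega> / complex_of_real (sqrt (real N))) - complex_of_real t))\<^sup>2
    + 2 * real N"
  show ?thesis
  proof (rule in_tree_spectrumI)
    fix C
    define M where "M = nat \<lceil>\<bar>C\<bar> * K\<rceil> + 2"
    have "M \<ge> 2" unfolding M_def by simp
    define v where "v = radial N (\<lambda>n. if n < M then (\<omega> / complex_of_real (sqrt (real N))) ^ n else 0)"
    note wave = truncated_plane_wave[OF N \<omega> \<open>M \<ge> 2\<close> \<mu>, folded v_def K_def]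
    have "C * l2_norm_sq N (\<lambda>x. tree_laplacian N v x - complex_of_real t * v x) \<le> \<bar>C\<bar> * K"
      using wave(3) l2_norm_sq_nonneg by (meson abs_ge_self abs_ge_zero mult_mono order.trans)
    also have "\<dots> < l2_norm_sq N v"
      unfolding wave(2) M_def by linarith
    finally show "\<exists>v\<in>l2 N. C * l2_norm_sq N (\<lambda>x. tree_laplacian N v x - complex_of_real t * v x)
        < l2_norm_sq N v"
      using wave(1) by blast
  qed
qed

section \<open>The resolvent outside the interval\<close>

definition descendant_series :: "nat \<Rightarrow> complex \<Rightarrow> (nat list \<Rightarrow> complex) \<Rightarrow> nat list \<Rightarrow> complex" where
  "descendant_series N q w x = (if x \<in> tree_V N then (\<Sum>k. q ^ k * descendant_sum N w x k) else 0)"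

lemma norm_descendant_series_term_le:
  "norm (q ^ k * descendant_sum N w x k)
     \<le> (norm q * sqrt (real N)) ^ k * sqrt (\<Sum>t\<in>tree_level N k. (norm (w (x @ t)))\<^sup>2)"
  using norm_descendant_sum_le[of N w x k]
  by (simp add: norm_mult norm_power power_mult_distrib mult.assoc mult_left_mono)

lemma descendant_series_summable:
  assumes w: "w \<in> l2 N" and x: "x \<in> tree_V N" and a: "norm q * sqrt (real N) < 1"
  shows "summable (\<lambda>k. norm (q ^ k * descendant_sum N w x k))"
proof (rule summable_comparison_test'[where N=0])
  let ?a = "norm q * sqrt (real N)"
  show "summable (\<lambda>k. ?a ^ k * sqrt (\<Sum>t\<in>tree_level N k. (norm (w (x @ t)))\<^sup>2))"
    using a sum_subtree_level_le_l2_norm_sq[OF w x]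
    by (intro square_suminf_geometric_weights_le(1)[where B="l2_norm_sq N w"]) (auto intro: sum_nonneg)
qed (use norm_descendant_series_term_le in auto)

lemma descendant_series_eq:
  assumes w: "w \<in> l2 N" and x: "x \<in> tree_V N" and a: "norm q * sqrt (real N) < 1"
  shows "descendant_series N q w x - q * (\<Sum>i\<in>{1..N}. descendant_series N q w (x @ [i])) = w x"
proof -
  have summable: "summable (\<lambda>k. q ^ k * descendant_sum N w y k)" if "y \<in> tree_V N" for y
    using descendant_series_summable[OF w that a] by (rule summable_norm_cancel)
  have child: "summable (\<lambda>k. q ^ k * descendant_sum N w (x @ [i]) k)" if "i \<in> {1..N}" for i
    using that x summable[of "x @ [i]"] by simp
  have "(\<Sum>i\<in>{1..N}. descendant_series N q w (x @ [i]))
      = (\<Sum>i\<in>{1..N}. \<Sum>k. q ^ k * descendant_sum N w (x @ [i]) k)"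
    using x by (intro sum.cong) (auto simp: descendant_series_def)
  also have "\<dots> = (\<Sum>k. q ^ k * descendant_sum N w x (Suc k))"
    unfolding descendant_sum_Suc sum_distrib_left by (rule suminf_sum[OF child, symmetric])
  finally have children: "(\<Sum>i\<in>{1..N}. descendant_series N q w (x @ [i]))
      = (\<Sum>k. q ^ k * descendant_sum N w x (Suc k))" .
  have "summable (\<lambda>k. q ^ k * descendant_sum N w x (Suc k))"
    unfolding descendant_sum_Suc sum_distrib_left by (rule summable_sum[OF child])
  from suminf_mult[OF this, of q]
  have "q * (\<Sum>i\<in>{1..N}. descendant_series N q w (x @ [i]))
      = (\<Sum>k. q ^ Suc k * descendant_sum N w x (Suc k))"
    unfolding children by (simp add: mult.assoc)
  moreover have "(\<Sum>k. q ^ Suc k * descendant_sum N w x (Suc k)) = descendant_series N q w x - w x"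
    using suminf_split_head[OF summable[OF x]] x by (simp add: descendant_series_def)
  ultimately show ?thesis
    by simp
qed

lemma norm_descendant_series_sq_le:
  assumes w: "w \<in> l2 N" and x: "x \<in> tree_V N" and a: "norm q * sqrt (real N) < 1"
  defines "e \<equiv> \<lambda>k. \<Sum>t\<in>tree_level N k. (norm (w (x @ t)))\<^sup>2"
  shows "summable (\<lambda>k. (norm q * sqrt (real N)) ^ k * e k)"
    "(norm (descendant_series N q w x))\<^sup>2
       \<le> (\<Sum>k. (norm q * sqrt (real N)) ^ k * e k) / (1 - norm q * sqrt (real N))"
proof -
  have a0: "0 \<le> norm q * sqrt (real N)"
    by simp
  have e: "\<And>k. 0 \<le> e k" "\<And>k. e k \<le> l2_norm_sq N w"
    unfolding e_def using sum_subtree_level_le_l2_norm_sq[OF w x] by (auto intro: sum_nonneg)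
  note geometric = square_suminf_geometric_weights_le[where e=e, OF a0 a e]
  then show "summable (\<lambda>k. (norm q * sqrt (real N)) ^ k * e k)"
    by blast
  have "norm (descendant_series N q w x) \<le> (\<Sum>k. norm (q ^ k * descendant_sum N w x k))"
    using x descendant_series_summable[OF w x a] by (simp add: descendant_series_def summable_norm)
  also have "\<dots> \<le> (\<Sum>k. (norm q * sqrt (real N)) ^ k * sqrt (e k))"
  proof (rule suminf_le)
    show "norm (q ^ k * descendant_sum N w x k) \<le> (norm q * sqrt (real N)) ^ k * sqrt (e k)" for k
      unfolding e_def by (rule norm_descendant_series_term_le)
  qed (fact descendant_series_summable[OF w x a], fact geometric(1))
  finally have "(norm (descendant_series N q w x))\<^sup>2
      \<le> (\<Sum>k. (norm q * sqrt (real N)) ^ k * sqrt (e k))\<^sup>2"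
    by (intro power_mono) auto
  with geometric(3) show "(norm (descendant_series N q w x))\<^sup>2
      \<le> (\<Sum>k. (norm q * sqrt (real N)) ^ k * e k) / (1 - norm q * sqrt (real N))"
    by linarith
qed

lemma descendant_series_l2:
  assumes w: "w \<in> l2 N" and a: "norm q * sqrt (real N) < 1"
  shows "descendant_series N q w \<in> l2 N"
    "l2_norm_sq N (descendant_series N q w) \<le> l2_norm_sq N w / (1 - norm q * sqrt (real N))\<^sup>2"
proof -
  define a where "a = norm q * sqrt (real N)"
  have a0: "0 \<le> a" "a < 1" using a unfolding a_def by auto
  define e where "e x k = (\<Sum>t\<in>tree_level N k. (norm (w (x @ t)))\<^sup>2)" for x k
  note pointwise = norm_descendant_series_sq_le[OF w _ a, folded a_def, unfolded e_def[symmetric]]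
  have bound: "(\<Sum>x\<in>F. (norm (descendant_series N q w x))\<^sup>2) \<le> l2_norm_sq N w / (1 - a)\<^sup>2"
    if F: "finite F" "F \<subseteq> tree_V N" for F
  proof -
    have "(\<Sum>x\<in>F. (norm (descendant_series N q w x))\<^sup>2) \<le> (\<Sum>x\<in>F. (\<Sum>k. a ^ k * e x k) / (1 - a))"
      using F pointwise(2) by (intro sum_mono) auto
    also have "\<dots> = (\<Sum>k. \<Sum>x\<in>F. a ^ k * e x k) / (1 - a)"
      using F pointwise(1) by (simp add: suminf_sum sum_divide_distrib subset_iff)
    also have "\<dots> \<le> (\<Sum>k. a ^ k * l2_norm_sq N w) / (1 - a)"
    proof (intro divide_right_mono suminf_le)
      show "(\<Sum>x\<in>F. a ^ k * e x k) \<le> a ^ k * l2_norm_sq N w" for k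
        unfolding sum_distrib_left[symmetric] e_def using a0
        by (intro mult_left_mono sum_descendants_le_l2_norm_sq[OF w F]) auto
      show "summable (\<lambda>k. \<Sum>x\<in>F. a ^ k * e x k)"
        using F pointwise(1) by (intro summable_sum) auto
      show "summable (\<lambda>k. a ^ k * l2_norm_sq N w)"
        using a0 by (intro summable_mult2 summable_geometric) auto
    qed (use a0 in auto)
    also have "\<dots> = l2_norm_sq N w / (1 - a)\<^sup>2"
      using a0 suminf_geometric[of a] suminf_mult2[OF summable_geometric, of a "l2_norm_sq N w"]
      by (simp add: power2_eq_square flip: divide_divide_eq_left)
    finally show ?thesis .
  qed
  have "\<And>x. x \<notin> tree_V N \<Longrightarrow> descendant_series N q w x = 0"
    by (simp add: descendant_series_def)
  from l2I[OF this bound] show "descendant_series N q w \<in> l2 N"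
    "l2_norm_sq N (descendant_series N q w) \<le> l2_norm_sq N w / (1 - norm q * sqrt (real N))\<^sup>2"
    unfolding a_def by blast+
qed

definition ancestor_series :: "nat \<Rightarrow> complex \<Rightarrow> (nat list \<Rightarrow> complex) \<Rightarrow> nat list \<Rightarrow> complex" where
  "ancestor_series N q u x =
     (if x \<in> tree_V N then (\<Sum>k\<le>length x. q ^ k * u (take (length x - k) x)) else 0)"

lemma ancestor_series_Nil [simp]: "ancestor_series N q u [] = u []"
  by (simp add: ancestor_series_def)

lemma ancestor_series_snoc:
  assumes "x @ [i] \<in> tree_V N"
  shows "ancestor_series N q u (x @ [i]) = u (x @ [i]) + q * ancestor_series N q u x"
proof -
  have "(\<Sum>k\<le>Suc (length x). q ^ k * u (take (Suc (length x) - k) (x @ [i])))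
      = u (x @ [i]) + q * (\<Sum>k\<le>length x. q ^ k * u (take (length x - k) x))"
    by (subst sum.atMost_Suc_shift) (simp add: sum_distrib_left mult.assoc)
  then show ?thesis
    using assms by (simp add: ancestor_series_def)
qed

lemma ancestors_at_distance_eq:
  "{x \<in> {y \<in> tree_V N. length y < M}. k \<le> length x}
     = (\<lambda>(y, t). y @ t) ` ({y \<in> tree_V N. length y < M - k} \<times> tree_level N k)"
proof (rule set_eqI, rule iffI)
  fix x assume x: "x \<in> {x \<in> {y \<in> tree_V N. length y < M}. k \<le> length x}"
  have "take (length x - k) x \<in> {y \<in> tree_V N. length y < M - k}"
    using x by (auto simp: tree_V_def dest: in_set_takeD)
  moreover have "drop (length x - k) x \<in> tree_level N k"
    using x by (auto simp: tree_V_def tree_level_def dest: in_set_dropD)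
  ultimately show "x \<in> (\<lambda>(y, t). y @ t) ` ({y \<in> tree_V N. length y < M - k} \<times> tree_level N k)"
    by (intro image_eqI[where x="(take (length x - k) x, drop (length x - k) x)"]) auto
qed (auto simp: tree_level_def tree_V_def subset_iff)

text \<open>Every vertex is the ancestor at distance \<open>k\<close> of exactly \<open>N ^ k\<close> vertices.\<close>
lemma sum_ancestors_at_distance_le:
  assumes u: "u \<in> l2 N" and N: "N \<ge> 1"
  shows "(\<Sum>x\<in>{x \<in> {y \<in> tree_V N. length y < M}. k \<le> length x}.
            (norm (u (take (length x - k) x)))\<^sup>2 / real N ^ k) \<le> l2_norm_sq N u"
proof -
  let ?B = "{y \<in> tree_V N. length y < M - k}"
  let ?f = "\<lambda>x. (norm (u (take (length x - k) x)))\<^sup>2 / real N ^ k"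
  have "(\<Sum>x\<in>{x \<in> {y \<in> tree_V N. length y < M}. k \<le> length x}. ?f x)
      = (\<Sum>y\<in>?B. \<Sum>t\<in>tree_level N k. ?f (y @ t))"
    unfolding ancestors_at_distance_eq by (rule sum_concat_tree_level[symmetric]) simp
  also have "\<dots> = (\<Sum>y\<in>?B. (norm (u y))\<^sup>2)"
  proof (rule sum.cong[OF refl])
    fix y
    have "(\<Sum>t\<in>tree_level N k. ?f (y @ t)) = (\<Sum>t\<in>tree_level N k. (norm (u y))\<^sup>2 / real N ^ k)"
      by (intro sum.cong refl) (simp add: tree_level_def)
    then show "(\<Sum>t\<in>tree_level N k. ?f (y @ t)) = (norm (u y))\<^sup>2"
      using N by (simp add: card_tree_level)
  qed
  also have "\<dots> \<le> l2_norm_sq N u"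
    by (rule sum_le_l2_norm_sq[OF u]) auto
  finally show ?thesis .
qed

lemma norm_ancestor_series_sq_le:
  assumes N: "N \<ge> 1" and a: "norm q * sqrt (real N) < 1" and x: "x \<in> tree_V N"
  shows "(norm (ancestor_series N q u x))\<^sup>2
    \<le> (\<Sum>k\<le>length x. (norm q * sqrt (real N)) ^ k * ((norm (u (take (length x - k) x)))\<^sup>2 / real N ^ k))
        / (1 - norm q * sqrt (real N))"
proof -
  define a where "a = norm q * sqrt (real N)"
  define b where "b k = (norm (u (take (length x - k) x)))\<^sup>2 / real N ^ k" for k
  have "norm (q ^ k * u (take (length x - k) x)) = a ^ k * sqrt (b k)" for k
    using N by (simp add: a_def b_def norm_mult norm_power power_mult_distrib real_sqrt_divide
        real_sqrt_power)
  then have "norm (ancestor_series N q u x) \<le> (\<Sum>k\<le>length x. a ^ k * sqrt (b k))"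
    using x norm_sum[of "\<lambda>k. q ^ k * u (take (length x - k) x)" "{..length x}"]
    by (simp add: ancestor_series_def)
  then have "(norm (ancestor_series N q u x))\<^sup>2 \<le> (\<Sum>k\<le>length x. a ^ k * sqrt (b k))\<^sup>2"
    by (intro power_mono) auto
  also have "\<dots> \<le> (\<Sum>k\<le>length x. a ^ k * b k) / (1 - a)"
    using a unfolding a_def by (intro square_sum_geometric_weights_le) (auto simp: b_def)
  finally show ?thesis
    unfolding a_def b_def .
qed

lemma ancestor_series_l2:
  assumes u: "u \<in> l2 N" and N: "N \<ge> 1" and a: "norm q * sqrt (real N) < 1"
  shows "ancestor_series N q u \<in> l2 N"
    "l2_norm_sq N (ancestor_series N q u) \<le> l2_norm_sq N u / (1 - norm q * sqrt (real N))\<^sup>2"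
proof -
  define a where "a = norm q * sqrt (real N)"
  have a0: "0 \<le> a" "a < 1" using a unfolding a_def by auto
  define b where "b x k = (norm (u (take (length x - k) x)))\<^sup>2 / real N ^ k" for x k
  note pointwise = norm_ancestor_series_sq_le[OF N a, folded a_def, of _ u, unfolded b_def[symmetric]]
  have bound: "(\<Sum>x\<in>{y \<in> tree_V N. length y < M}. (norm (ancestor_series N q u x))\<^sup>2)
      \<le> l2_norm_sq N u / (1 - a)\<^sup>2" for M
  proof -
    let ?B = "{y \<in> tree_V N. length y < M}"
    have swap: "(\<Sum>x\<in>?B. \<Sum>k\<in>{k \<in> {..<M}. k \<le> length x}. a ^ k * b x k)
        = (\<Sum>k<M. a ^ k * (\<Sum>x\<in>{x \<in> ?B. k \<le> length x}. b x k))"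
      unfolding sum_distrib_left by (rule sum.swap_restrict) simp_all
    have "(\<Sum>x\<in>?B. (norm (ancestor_series N q u x))\<^sup>2)
        \<le> (\<Sum>x\<in>?B. (\<Sum>k\<in>{k \<in> {..<M}. k \<le> length x}. a ^ k * b x k) / (1 - a))"
    proof (rule sum_mono)
      fix x assume "x \<in> ?B"
      then have "{k \<in> {..<M}. k \<le> length x} = {..length x}" by auto
      then show "(norm (ancestor_series N q u x))\<^sup>2
          \<le> (\<Sum>k\<in>{k \<in> {..<M}. k \<le> length x}. a ^ k * b x k) / (1 - a)"
        using pointwise \<open>x \<in> ?B\<close> by simp
    qed
    also have "\<dots> = (\<Sum>k<M. a ^ k * (\<Sum>x\<in>{x \<in> ?B. k \<le> length x}. b x k)) / (1 - a)"
      unfolding sum_divide_distrib[symmetric] swap ..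
    also have "\<dots> \<le> (\<Sum>k<M. a ^ k) * l2_norm_sq N u / (1 - a)"
      unfolding sum_distrib_right using a0 sum_ancestors_at_distance_le[OF u N]
      by (intro divide_right_mono sum_mono mult_left_mono) (auto simp: b_def)
    also have "\<dots> \<le> 1 / (1 - a) * l2_norm_sq N u / (1 - a)"
      using a0 l2_norm_sq_nonneg by (intro divide_right_mono mult_right_mono sum_power_le_geometric) auto
    finally show ?thesis by (simp add: power2_eq_square)
  qed
  have "\<And>x. x \<notin> tree_V N \<Longrightarrow> ancestor_series N q u x = 0"
    by (simp add: ancestor_series_def)
  from l2I_balls[OF this bound] show "ancestor_series N q u \<in> l2 N"
    "l2_norm_sq N (ancestor_series N q u) \<le> l2_norm_sq N u / (1 - norm q * sqrt (real N))\<^sup>2"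
    unfolding a_def by blast+
qed

text \<open>The ancestor series inverts \<open>1 - q P\<close>; what remains of \<open>q (\<Delta> - \<mu>)\<close> is \<open>1 - q C\<close> and a defect at
  the root.\<close>
lemma tree_laplacian_ancestor_series:
  assumes char: "q * (of_nat N + 1 - \<mu>) - of_nat N * q\<^sup>2 = 1" and x: "x \<in> tree_V N"
  shows "q * (tree_laplacian N (ancestor_series N q u) x - \<mu> * ancestor_series N q u x)
       = u x - q * (\<Sum>i\<in>{1..N}. u (x @ [i])) - (if x = [] then q * u [] else 0)"
proof -
  let ?h = "ancestor_series N q u"
  have "(\<Sum>i\<in>{1..N}. ?h (x @ [i])) = (\<Sum>i\<in>{1..N}. u (x @ [i]) + q * ?h x)"
    using x by (intro sum.cong refl ancestor_series_snoc) simp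
  then have children: "(\<Sum>i\<in>{1..N}. ?h (x @ [i])) = (\<Sum>i\<in>{1..N}. u (x @ [i])) + of_nat N * (q * ?h x)"
    by (simp add: sum.distrib)
  have "q * (tree_laplacian N ?h x - \<mu> * ?h x)
      = (q * (of_nat N + 1 - \<mu>) - of_nat N * q\<^sup>2) * ?h x - q * (\<Sum>i\<in>{1..N}. u (x @ [i]))
        - q * (if x = [] then ?h x else ?h (butlast x))"
    unfolding tree_laplacian_eq[OF x] children by (simp add: algebra_simps power2_eq_square)
  also have "\<dots> = u x - q * (\<Sum>i\<in>{1..N}. u (x @ [i])) - (if x = [] then q * u [] else 0)"
  proof (cases x rule: rev_cases)
    case (snoc y i)
    then show ?thesis using x ancestor_series_snoc[of y i N q u] by (simp add: char)
  qed (simp add: char)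
  finally show ?thesis .
qed

lemma geometric_radial_l2:
  assumes a: "norm q * sqrt (real N) < 1"
  shows "radial N (\<lambda>n. q ^ Suc n) \<in> l2 N"
proof -
  define a where "a = norm q * sqrt (real N)"
  have a0: "0 \<le> a\<^sup>2" "a\<^sup>2 < 1"
    using a unfolding a_def by (auto simp: abs_square_less_1)
  have "(\<Sum>x\<in>{y \<in> tree_V N. length y < M}. (norm (radial N (\<lambda>n. q ^ Suc n) x))\<^sup>2)
      \<le> (norm q)\<^sup>2 * (1 / (1 - a\<^sup>2))" for M
  proof -
    have "real N ^ n * (norm (q ^ Suc n))\<^sup>2 = (norm q)\<^sup>2 * (a\<^sup>2) ^ n" for n
      by (simp add: a_def norm_mult norm_power power_mult_distrib power_mult[symmetric] mult.commute[of n 2])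
    then have "(\<Sum>x\<in>{y \<in> tree_V N. length y < M}. (norm (radial N (\<lambda>n. q ^ Suc n) x))\<^sup>2)
        = (norm q)\<^sup>2 * (\<Sum>n<M. (a\<^sup>2) ^ n)"
      unfolding sum_radial_ball sum_distrib_left by simp
    also have "\<dots> \<le> (norm q)\<^sup>2 * (1 / (1 - a\<^sup>2))"
      using a0 by (intro mult_left_mono sum_power_le_geometric) auto
    finally show ?thesis .
  qed
  moreover have "\<And>x. x \<notin> tree_V N \<Longrightarrow> radial N (\<lambda>n. q ^ Suc n) x = 0"
    by (simp add: radial_def)
  ultimately show ?thesis
    using l2I_balls(1) by blast
qed

lemma tree_laplacian_geometric_radial:
  assumes char: "q * (of_nat N + 1 - \<mu>) - of_nat N * q\<^sup>2 = 1"
  shows "tree_laplacian N (radial N (\<lambda>n. q ^ Suc n)) x - \<mu> * radial N (\<lambda>n. q ^ Suc n) x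
       = (if x = [] then 1 - q else 0)"
proof (cases "x \<in> tree_V N")
  case True
  have "radial_laplacian N (\<lambda>n. q ^ Suc n) n - \<mu> * q ^ Suc n
      = q ^ n * (q * (of_nat N + 1 - \<mu>) - of_nat N * q\<^sup>2) - (if n = 0 then q else q ^ n)" for n
    by (cases n) (simp_all add: radial_laplacian_def power2_eq_square algebra_simps)
  then show ?thesis
    using True char by (simp add: tree_laplacian_radial radial_def)
qed (auto simp: tree_laplacian_radial radial_def)

text \<open>Since \<open>\<Delta> - \<mu>\<close> is injective on \<open>l\<^sup>2\<close>, a bounded right inverse is also a left inverse.\<close>
lemma not_in_tree_spectrumI:
  assumes N: "N \<ge> 1"
    and S_l2: "\<And>w. w \<in> l2 N \<Longrightarrow> S w \<in> l2 N"
    and S_bounded: "\<And>w. w \<in> l2 N \<Longrightarrow> l2_norm_sq N (S w) \<le> K * l2_norm_sq N w"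
    and S_right_inverse: "\<And>w x. w \<in> l2 N \<Longrightarrow> tree_laplacian N (S w) x - \<mu> * S w x = w x"
  shows "\<mu> \<notin> tree_spectrum N"
proof -
  have "S (\<lambda>x. tree_laplacian N v x - \<mu> * v x) = v" if v: "v \<in> l2 N" for v
  proof -
    let ?w = "\<lambda>x. tree_laplacian N v x - \<mu> * v x"
    have w: "?w \<in> l2 N"
      by (rule tree_laplacian_shift_l2[OF v])
    have d: "(\<lambda>x. S ?w x - v x) \<in> l2 N"
      using l2_lin_comb(1)[OF S_l2[OF w] v, of 1 "- 1"] by simp
    have "tree_laplacian N (\<lambda>x. S ?w x - v x) x = \<mu> * (S ?w x - v x)" for x
      using S_right_inverse[OF w, of x] unfolding tree_laplacian_diff by (simp add: algebra_simps)
    then have "(\<lambda>x. S ?w x - v x) = (\<lambda>_. 0)"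
      by (rule l2_eigenfunction_eq_0[OF N d])
    then show ?thesis
      by (simp add: fun_eq_iff)
  qed
  moreover have "l2_norm N (S w) \<le> sqrt K * l2_norm N w" if "w \<in> l2 N" for w
    unfolding l2_norm_eq_sqrt real_sqrt_mult[symmetric] using S_bounded[OF that] by simp
  ultimately show ?thesis
    unfolding tree_spectrum_def using S_l2 S_right_inverse by blast
qed

lemma obtain_joukowski_preimage_in_open_disc:
  assumes N: "N \<ge> 1"
    and \<mu>: "\<mu> \<notin> complex_of_real ` {real N + 1 - 2 * sqrt (real N) .. real N + 1 + 2 * sqrt (real N)}"
  obtains r where "r \<noteq> 0" "norm r < 1"
    "of_nat N + 1 - \<mu> = complex_of_real (sqrt (real N)) * (r + inverse r)"
proof -
  define s where "s = complex_of_real (sqrt (real N))"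
  have "s \<noteq> 0" using N unfolding s_def by simp
  obtain r where r: "r \<noteq> 0" "norm r \<le> 1" "(of_nat N + 1 - \<mu>) / s = r + inverse r"
    and circle: "norm r = 1 \<Longrightarrow> (of_nat N + 1 - \<mu>) / s \<in> \<real> \<and> \<bar>Re ((of_nat N + 1 - \<mu>) / s)\<bar> \<le> 2"
    using obtain_joukowski_preimage by metis
  have "norm r \<noteq> 1"
  proof
    assume "norm r = 1"
    then obtain l where l: "(of_nat N + 1 - \<mu>) / s = complex_of_real l" "\<bar>l\<bar> \<le> 2"
      using circle by (metis Reals_cases Re_complex_of_real)
    then have "\<mu> = complex_of_real (real N + 1 - sqrt (real N) * l)"
      using \<open>s \<noteq> 0\<close> unfolding s_def by (simp add: field_simps)
    moreover have "\<bar>sqrt (real N) * l\<bar> \<le> 2 * sqrt (real N)"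
      using mult_right_mono[OF l(2), of "sqrt (real N)"] by (simp add: abs_mult mult.commute)
    then have "real N + 1 - sqrt (real N) * l
        \<in> {real N + 1 - 2 * sqrt (real N) .. real N + 1 + 2 * sqrt (real N)}"
      by (auto simp: abs_le_iff)
    ultimately show False
      using \<mu> by blast
  qed
  moreover have "of_nat N + 1 - \<mu> = s * (r + inverse r)"
    using r(3) \<open>s \<noteq> 0\<close> by (simp add: field_simps)
  ultimately show ?thesis
    using that[of r] r(1,2) unfolding s_def by simp
qed

text \<open>The defect at the root is corrected by the geometric radial function \<open>n \<mapsto> q ^ (n + 1)\<close>, which
  solves the eigenvalue equation away from the root.\<close>
definition tree_resolvent :: "nat \<Rightarrow> complex \<Rightarrow> (nat list \<Rightarrow> complex) \<Rightarrow> nat list \<Rightarrow> complex" where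
  "tree_resolvent N q w x = q * ancestor_series N q (descendant_series N q w) x
     + q * descendant_series N q w [] / (1 - q) * radial N (\<lambda>n. q ^ Suc n) x"

lemma tree_resolvent_right_inverse:
  assumes N: "N \<ge> 1" and a: "norm q * sqrt (real N) < 1"
    and char: "q * (of_nat N + 1 - \<mu>) - of_nat N * q\<^sup>2 = 1" and w: "w \<in> l2 N"
  shows "tree_laplacian N (tree_resolvent N q w) x - \<mu> * tree_resolvent N q w x = w x"
proof (cases "x \<in> tree_V N")
  case True
  let ?Y = "descendant_series N q w"
  define \<kappa> where "\<kappa> = q * ?Y [] / (1 - q)"
  have "q \<noteq> 1"
    using a N real_sqrt_ge_one[of "real N"] by auto
  have "q \<noteq> 0"
    using char by auto
  have "q * (tree_laplacian N (tree_resolvent N q w) x - \<mu> * tree_resolvent N q w x)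
      = q * (q * (tree_laplacian N (ancestor_series N q ?Y) x - \<mu> * ancestor_series N q ?Y x)
             + \<kappa> * (tree_laplacian N (radial N (\<lambda>n. q ^ Suc n)) x - \<mu> * radial N (\<lambda>n. q ^ Suc n) x))"
    unfolding tree_resolvent_def[abs_def] \<kappa>_def[symmetric] tree_laplacian_lin_comb
    by (simp add: algebra_simps)
  also have "\<dots> = q * (w x - (if x = [] then q * ?Y [] else 0) + \<kappa> * (if x = [] then 1 - q else 0))"
    unfolding tree_laplacian_ancestor_series[OF char True] tree_laplacian_geometric_radial[OF char]
      descendant_series_eq[OF w True a] ..
  also have "\<dots> = q * w x"
    using \<open>q \<noteq> 1\<close> unfolding \<kappa>_def by (cases "x = []") simp_all
  finally show ?thesis
    using \<open>q \<noteq> 0\<close> by simp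
next
  case False
  then show ?thesis
    using l2_vanishes_outside[OF w False]
    by (simp add: tree_resolvent_def tree_laplacian_def ancestor_series_def radial_def)
qed

lemma tree_resolvent_bounded:
  assumes N: "N \<ge> 1" and a: "norm q * sqrt (real N) < 1"
  obtains K where "\<And>w. w \<in> l2 N \<Longrightarrow>
    tree_resolvent N q w \<in> l2 N \<and> l2_norm_sq N (tree_resolvent N q w) \<le> K * l2_norm_sq N w"
proof -
  define a where "a = norm q * sqrt (real N)"
  define G where "G = radial N (\<lambda>n. q ^ Suc n)"
  have G: "G \<in> l2 N"
    unfolding G_def using a by (rule geometric_radial_l2)
  define c where "c = (norm q / norm (1 - q))\<^sup>2"
  define K where "K = 2 * (norm q)\<^sup>2 / (1 - a)\<^sup>2 + 2 * c * l2_norm_sq N G"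
  have "K \<ge> 0"
    unfolding K_def c_def using l2_norm_sq_nonneg[of N G] by simp
  have "tree_resolvent N q w \<in> l2 N \<and> l2_norm_sq N (tree_resolvent N q w) \<le> K / (1 - a)\<^sup>2 * l2_norm_sq N w"
    if w: "w \<in> l2 N" for w
  proof
    let ?Y = "descendant_series N q w"
    define \<kappa> where "\<kappa> = q * ?Y [] / (1 - q)"
    have R: "tree_resolvent N q w = (\<lambda>x. q * ancestor_series N q ?Y x + \<kappa> * G x)"
      unfolding tree_resolvent_def[abs_def] \<kappa>_def G_def ..
    note Y = descendant_series_l2[OF w a, folded a_def]
    note X = ancestor_series_l2[OF Y(1) N a, folded a_def]
    show "tree_resolvent N q w \<in> l2 N"
      unfolding R by (rule l2_lin_comb(1)[OF X(1) G])
    have "(norm \<kappa>)\<^sup>2 = c * (norm (?Y []))\<^sup>2"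
      unfolding c_def \<kappa>_def by (simp add: norm_mult norm_divide power_mult_distrib power_divide)
    also have "\<dots> \<le> c * l2_norm_sq N ?Y"
      using sum_le_l2_norm_sq[OF Y(1), of "{[]}"] unfolding c_def by (intro mult_left_mono) simp_all
    finally have "2 * (norm \<kappa>)\<^sup>2 * l2_norm_sq N G \<le> 2 * (c * l2_norm_sq N ?Y) * l2_norm_sq N G"
      by (intro mult_right_mono mult_left_mono l2_norm_sq_nonneg) simp_all
    moreover have "2 * (norm q)\<^sup>2 * l2_norm_sq N (ancestor_series N q ?Y)
        \<le> 2 * (norm q)\<^sup>2 * (l2_norm_sq N ?Y / (1 - a)\<^sup>2)"
      by (intro mult_left_mono X(2)) simp
    ultimately have "l2_norm_sq N (tree_resolvent N q w) \<le> K * l2_norm_sq N ?Y"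
      using l2_lin_comb(2)[OF X(1) G, of q \<kappa>] unfolding R K_def
      by (simp add: algebra_simps)
    also have "\<dots> \<le> K * (l2_norm_sq N w / (1 - a)\<^sup>2)"
      using Y(2) \<open>K \<ge> 0\<close> by (rule mult_left_mono)
    finally show "l2_norm_sq N (tree_resolvent N q w) \<le> K / (1 - a)\<^sup>2 * l2_norm_sq N w"
      by simp
  qed
  then show ?thesis
    using that by blast
qed

lemma outside_interval_not_in_tree_spectrum:
  assumes N: "N \<ge> 1"
    and \<mu>: "\<mu> \<notin> complex_of_real ` {real N + 1 - 2 * sqrt (real N) .. real N + 1 + 2 * sqrt (real N)}"
  shows "\<mu> \<notin> tree_spectrum N"
proof -
  obtain r where r: "r \<noteq> 0" "norm r < 1"
    and \<mu>_eq: "of_nat N + 1 - \<mu> = complex_of_real (sqrt (real N)) * (r + inverse r)"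
    using obtain_joukowski_preimage_in_open_disc[OF N \<mu>] .
  define s where "s = complex_of_real (sqrt (real N))"
  have s: "s \<noteq> 0" "s\<^sup>2 = of_nat N"
    using N unfolding s_def by (simp_all flip: of_real_power)
  define q where "q = r / s"
  have a: "norm q * sqrt (real N) < 1"
    using N r(2) unfolding q_def s_def by (simp add: norm_divide)
  have "q * (of_nat N + 1 - \<mu>) = r * (r + inverse r)"
    unfolding \<mu>_eq q_def s_def[symmetric] using s(1) by simp
  also have "\<dots> = r\<^sup>2 + 1"
    using r(1) by (simp add: field_simps power2_eq_square)
  moreover have "of_nat N * q\<^sup>2 = r\<^sup>2"
    unfolding q_def s(2)[symmetric] using s(1) by (simp add: power_divide)
  ultimately have char: "q * (of_nat N + 1 - \<mu>) - of_nat N * q\<^sup>2 = 1"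
    by simp
  obtain K where "\<And>w. w \<in> l2 N \<Longrightarrow>
      tree_resolvent N q w \<in> l2 N \<and> l2_norm_sq N (tree_resolvent N q w) \<le> K * l2_norm_sq N w"
    using tree_resolvent_bounded[OF N a] by blast
  then show ?thesis
    using not_in_tree_spectrumI[OF N _ _ tree_resolvent_right_inverse[OF N a char]] by blast
qed

theorem proposition3p20:
  fixes N :: nat
  assumes "N \<ge> 1"
  shows "tree_spectrum N = complex_of_real ` {real N + 1 - 2 * sqrt (real N) .. real N + 1 + 2 * sqrt (real N)}
         \<and> tree_eigenvalues N = {}"
proof
  show "tree_spectrum N
      = complex_of_real ` {real N + 1 - 2 * sqrt (real N) .. real N + 1 + 2 * sqrt (real N)}"
  proof
    show "tree_spectrum N
        \<subseteq> complex_of_real ` {real N + 1 - 2 * sqrt (real N) .. real N + 1 + 2 * sqrt (real N)}"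
      using outside_interval_not_in_tree_spectrum[OF assms] by blast
    show "complex_of_real ` {real N + 1 - 2 * sqrt (real N) .. real N + 1 + 2 * sqrt (real N)}
        \<subseteq> tree_spectrum N"
      using interval_subset_tree_spectrum[OF assms] by blast
  qed
  show "tree_eigenvalues N = {}"
  proof (rule equals0I)
    fix \<mu> assume "\<mu> \<in> tree_eigenvalues N"
    then obtain v where "v \<in> l2 N" "v \<noteq> (\<lambda>_. 0)" "tree_laplacian N v = (\<lambda>x. \<mu> * v x)"
      unfolding tree_eigenvalues_def by blast
    then show False
      using l2_eigenfunction_eq_0[OF assms, of v \<mu>] by simp
  qed
qed

end
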